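(* Let $L\in \mathbb{N}$ with $L\geq 3$, let $d,B\in \mathbb{N}$, $p,q\in [1,\infty]$, and $c\in (0,\infty)$. Suppose that the target class $U\subset C([0,1]^d)$ contains a copy of $\mathcal{H}_{(d,B,\dots , B,1),c}^q$ with constant $c_0>0$, where $B$ appears $L-1$ times in $(d,B,\dots,B,1)$; that is, there is $u_0\in U$ with $u_0+c_0\cdot \mathcal{H}_{(d,B,\dots , B,1),c}^q\subset U$. Then for every $m\in\mathbb{N}$ and every $s\in \mathbb{N}$ with $s\le \min\{\frac{B}{3},d\}$, \[ \mathrm{err}_m^{MC}(U,L^p([0,1]^d)) \geq c_0\cdot \frac{\Omega}{(64s)^{1+\frac{s}{p}}}\cdot m^{-\frac{1}{p} - \frac{1}{s}}, \] where \[ \Omega = \begin{cases} \frac{1}{4 \cdot 3^{2/q}} \cdot c^L \cdot s^{1-\frac{2}{q}} & \text{if } q\le 2, \\ \frac{1}{24} \cdot c^L\cdot (B^{1-\frac{2}{q}})^{L-1} & \text{if } q\geq 2 .\end{cases} \] (Here $1/p=0$ and $2/q=0$ when $p=\infty$, resp. $q=\infty$.)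
   Context: ReLU: $\varrho(x)=\max\{0,x\}$, applied componentwise to vectors. For an architecture $(N_0,\dots,N_L)\in\mathbb{N}^{L+1}$ and coefficients $\Phi=((W^i,b^i))_{i=1}^L$ with $W^i\in\mathbb{R}^{N_i\times N_{i-1}}$, $b^i\in\mathbb{R}^{N_i}$, the realization $R(\Phi):\mathbb{R}^{N_0}\to\mathbb{R}^{N_L}$ is $R(\Phi)(x)=x^L$ where $x^0=x$, $x^i=\varrho(W^ix^{i-1}+b^i)$ for $i\in\{1,\dots,L-1\}$, and $x^L=W^Lx^{L-1}+b^L$. For a matrix or vector, $\|\cdot\|_{\ell^q}$ is the $\ell^q$ norm of its entries (max of absolute values for $q=\infty$), and $\|\Phi\|_{\ell^q}=\max_{1\le i\le L}\max\{\|W^i\|_{\ell^q},\|b^i\|_{\ell^q}\}$. Define $\mathcal{H}^q_{(N_0,\dots,N_L),c}=\{R(\Phi): \|\Phi\|_{\ell^q}\le c\}$ (functions restricted to $[0,1]^d$ where relevant). Algorithms: Let $Y$ be a Banach space and $U\subset C([0,1]^d)\cap Y$. A map $A:U\to Y$ is an adaptive deterministic method using $m$ point samples if there are $f_1\in[0,1]^d$, maps $f_i:([0,1]^d)^{i-1}\times\mathbb{R}^{i-1}\to[0,1]^d$ ($i=2,\dots,m$) and $Q:([0,1]^d)^m\times\mathbb{R}^m\to Y$ such that for every $u\in U$, with $x_1=f_1$ and $x_i=f_i(x_1,\dots,x_{i-1},u(x_1),\dots,u(x_{i-1}))$, one has $A(u)=Q(x_1,\dots,x_m,u(x_1),\dots,u(x_m))$;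 the set of these is $\mathrm{Alg}_m(U,Y)$. An adaptive random method using $m$ point samples on average is a pair $(\mathbf{A},\mathbf{m})$ with $\mathbf{A}=(A_\omega)_{\omega\in\Omega}$ over a probability space $(\Omega,\mathcal{F},\mathbb{P})$ and $\mathbf{m}:\Omega\to\mathbb{N}$ measurable with $\mathbb{E}[\mathbf{m}]\le m$, such that $\omega\mapsto A_\omega(u)$ is Borel measurable for every $u\in U$ and $A_\omega\in\mathrm{Alg}_{\mathbf{m}(\omega)}(U,Y)$ for every $\omega$; the set of these is $\mathrm{Alg}^{MC}_m(U,Y)$. The optimal randomized error is $\mathrm{err}^{MC}_m(U,Y)=\inf_{(\mathbf{A},\mathbf{m})\in\mathrm{Alg}^{MC}_m(U,Y)}\sup_{u\in U}\mathbb{E}[\|u-A_\omega(u)\|_Y]$. *)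

theory Defs
  imports "HOL-Analysis.Analysis" "HOL-Probability.Probability"
begin

(* Exponents p, q \<in> [1,\<infinity>] are extended reals.  inv_exp p = 1/p, with 1/\<infinity> = 0. *)
definition inv_exp :: "ereal \<Rightarrow> real" where
  "inv_exp p = (if p = \<infinity> then 0 else 1 / real_of_ereal p)"

(* Points of R^d are functions nat \<Rightarrow> real; only coordinates < d matter. *)
definition relu :: "real \<Rightarrow> real" where
  "relu x = max 0 x"

definition affine :: "(nat \<Rightarrow> nat \<Rightarrow> real) \<Rightarrow> (nat \<Rightarrow> real) \<Rightarrow> nat \<Rightarrow> (nat \<Rightarrow> real) \<Rightarrow> (nat \<Rightarrow> real)" where
  "affine W b n_in x = (\<lambda>i. (\<Sum>j<n_in. W i j * x j) + b i)"

fun realize :: "nat list \<Rightarrow> ((nat \<Rightarrow> nat \<Rightarrow> real) \<times> (nat \<Rightarrow> real)) list \<Rightarrow> (nat \<Rightarrow> real) \<Rightarrow> (nat \<Rightarrow> real)" where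
  "realize (n0 # n1 # ns) ((W, b) # \<Phi>) x =
     (if ns = [] then affine W b n0 x
      else realize (n1 # ns) \<Phi> (\<lambda>i. relu (affine W b n0 x i)))"
| "realize _ _ x = x"

definition lq_norm :: "ereal \<Rightarrow> 'i set \<Rightarrow> ('i \<Rightarrow> real) \<Rightarrow> real" where
  "lq_norm q I a = (if q = \<infinity> then (if I = {} then 0 else Max ((\<lambda>i. \<bar>a i\<bar>) ` I))
                    else (\<Sum>i\<in>I. \<bar>a i\<bar> powr real_of_ereal q) powr (1 / real_of_ereal q))"

definition coeff_norm :: "ereal \<Rightarrow> nat list \<Rightarrow> ((nat \<Rightarrow> nat \<Rightarrow> real) \<times> (nat \<Rightarrow> real)) list \<Rightarrow> real" where
  "coeff_norm q arch \<Phi> = Max ({0} \<union> (\<lambda>k. max (lq_norm q ({..<arch ! (Suc k)} \<times> {..<arch ! k}) (\<lambda>(i,j). fst (\<Phi> ! k) i j))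
                                     (lq_norm q {..<arch ! (Suc k)} (snd (\<Phi> ! k)))) ` {..<length \<Phi>})"

definition Hclass :: "ereal \<Rightarrow> nat list \<Rightarrow> real \<Rightarrow> ((nat \<Rightarrow> real) \<Rightarrow> real) set" where
  "Hclass q arch c = {(\<lambda>x. realize arch \<Phi> x 0) | \<Phi>. length \<Phi> + 1 = length arch \<and> coeff_norm q arch \<Phi> \<le> c}"

definition cube :: "nat \<Rightarrow> (nat \<Rightarrow> real) set" where
  "cube d = PiE {..<d} (\<lambda>_. {0..1})"

definition cube_measure :: "nat \<Rightarrow> (nat \<Rightarrow> real) measure" where
  "cube_measure d = PiM {..<d} (\<lambda>_. restrict_space lborel {0..1})"

definition lp_norm :: "ereal \<Rightarrow> nat \<Rightarrow> ((nat \<Rightarrow> real) \<Rightarrow> real) \<Rightarrow> ennreal" where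
  "lp_norm p d f =
     (if p = \<infinity> then e2ennreal (esssup (cube_measure d) (\<lambda>x. ereal \<bar>f x\<bar>))
      else (let I = (\<integral>\<^sup>+ x. ennreal (\<bar>f x\<bar> powr real_of_ereal p) \<partial>cube_measure d)
            in if I = \<infinity> then \<infinity> else ennreal (enn2real I powr (1 / real_of_ereal p))))"

(* L^p([0,1]^d) as a set of representatives (functions identified a.e. by the norm) *)
definition Lp_space :: "ereal \<Rightarrow> nat \<Rightarrow> ((nat \<Rightarrow> real) \<Rightarrow> real) set" where
  "Lp_space p d = {f. f \<in> borel_measurable (cube_measure d) \<and> lp_norm p d f < \<infinity>}"

definition lp_dist :: "ereal \<Rightarrow> nat \<Rightarrow> ((nat \<Rightarrow> real) \<Rightarrow> real) \<Rightarrow> ((nat \<Rightarrow> real) \<Rightarrow> real) \<Rightarrow> ennreal" where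
  "lp_dist p d f g = lp_norm p d (\<lambda>x. f x - g x)"

definition Lp_open :: "ereal \<Rightarrow> nat \<Rightarrow> ((nat \<Rightarrow> real) \<Rightarrow> real) set \<Rightarrow> bool" where
  "Lp_open p d S \<longleftrightarrow> S \<subseteq> Lp_space p d \<and>
     (\<forall>f\<in>S. \<exists>e>0. \<forall>g\<in>Lp_space p d. lp_dist p d f g < ennreal e \<longrightarrow> g \<in> S)"

(* sample points of an adaptive method: F i (points so far, values so far) is the (i+1)-th point *)
fun sample_pts :: "(nat \<Rightarrow> (nat \<Rightarrow> real) list \<Rightarrow> real list \<Rightarrow> (nat \<Rightarrow> real)) \<Rightarrow> ((nat \<Rightarrow> real) \<Rightarrow> real) \<Rightarrow> nat \<Rightarrow> (nat \<Rightarrow> real) list" where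
  "sample_pts F u 0 = []"
| "sample_pts F u (Suc i) = (let xs = sample_pts F u i in xs @ [F i xs (map u xs)])"

definition Alg :: "nat \<Rightarrow> ((nat \<Rightarrow> real) \<Rightarrow> real) set \<Rightarrow> ereal \<Rightarrow> nat \<Rightarrow>
     (((nat \<Rightarrow> real) \<Rightarrow> real) \<Rightarrow> ((nat \<Rightarrow> real) \<Rightarrow> real)) set" where
  "Alg m U p d = {A. (\<forall>u\<in>U. A u \<in> Lp_space p d) \<and>
     (\<exists>F Q. (\<forall>i xs ys. F i xs ys \<in> cube d) \<and>
            (\<forall>u\<in>U. A u = Q (sample_pts F u m) (map u (sample_pts F u m))))}"

definition Alg_MC :: "nat \<Rightarrow> ((nat \<Rightarrow> real) \<Rightarrow> real) set \<Rightarrow> ereal \<Rightarrow> nat \<Rightarrow>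
     ('w measure \<times> ('w \<Rightarrow> ((nat \<Rightarrow> real) \<Rightarrow> real) \<Rightarrow> ((nat \<Rightarrow> real) \<Rightarrow> real)) \<times> ('w \<Rightarrow> nat)) set" where
  "Alg_MC m U p d = {(P, A, mm). prob_space P \<and>
     mm \<in> measurable P (count_space UNIV) \<and>
     (\<integral>\<^sup>+ \<omega>. ennreal (real (mm \<omega>)) \<partial>P) \<le> ennreal (real m) \<and>
     (\<forall>u\<in>U. \<forall>S. Lp_open p d S \<longrightarrow> {\<omega>\<in>space P. A \<omega> u \<in> S} \<in> sets P) \<and>
     (\<forall>\<omega>\<in>space P. A \<omega> \<in> Alg (mm \<omega>) U p d)}"

definition mc_worst_error :: "'w measure \<Rightarrow> ('w \<Rightarrow> ((nat \<Rightarrow> real) \<Rightarrow> real) \<Rightarrow> ((nat \<Rightarrow> real) \<Rightarrow> real)) \<Rightarrow>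
     ((nat \<Rightarrow> real) \<Rightarrow> real) set \<Rightarrow> ereal \<Rightarrow> nat \<Rightarrow> ennreal" where
  "mc_worst_error P A U p d = (SUP u\<in>U. \<integral>\<^sup>+ \<omega>. lp_dist p d u (A \<omega> u) \<partial>P)"

(* err^MC_m(U, L^p([0,1]^d)), the infimum ranging over methods on probability spaces whose sample type is 'w *)
definition err_MC :: "'w itself \<Rightarrow> nat \<Rightarrow> ((nat \<Rightarrow> real) \<Rightarrow> real) set \<Rightarrow> ereal \<Rightarrow> nat \<Rightarrow> ennreal" where
  "err_MC _ m U p d = (INF (P, A, mm) \<in> (Alg_MC m U p d :: ('w measure \<times> _ \<times> _) set). mc_worst_error P A U p d)"

end

theory Submission
  imports Defs
begin

text \<open>
  A fooling argument in the style of Bakhvalov. Cut the first \<open>s\<close> coordinates of the cube into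
  \<open>N\<^sup>s \<ge> 2 m\<close> cells of side \<open>1 / N\<close> and put on each cell the hat function
  \<open>g \<cdot> max 0 (1 / (2 N) - \<parallel>x - a\<parallel>\<^sub>1)\<close>. An algorithm that samples \<open>n\<close> points cannot tell \<open>u\<^sub>0\<close>
  from \<open>u\<^sub>0 + c\<^sub>0 \<cdot> hat\<close> for the hats whose support it misses, so for all but \<open>n\<close> of them it errs by
  half their \<open>L\<^sup>p\<close> distance \<open>D\<close> from \<open>u\<^sub>0\<close>; averaging over the hats and over the randomness
  (\<open>E n \<le> m\<close>) gives the error bound \<open>D / 4\<close>, which is of order \<open>c\<^sub>0 g m\<^bsup>-1/p-1/s\<^esup>\<close>.
  Each hat is realised by a network of the given architecture with coefficients of \<open>\<ell>\<^sup>q\<close> norm at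
  most \<open>c\<close>: the first layer computes the summands of \<open>\<parallel>x - a\<parallel>\<^sub>1\<close>, the second adds them, the
  others only rescale. The attainable gain \<open>g\<close> is largest with one unit per layer if \<open>q \<le> 2\<close>
  and with all \<open>B\<close> units (many small weights) if \<open>q \<ge> 2\<close>; this gives the two values of \<open>\<Omega>\<close>.
\<close>

section \<open>\<open>L\<^sup>p\<close> norms on the unit cube\<close>

lemma prob_space_unit_interval: "prob_space (restrict_space lborel {0..1::real})"
  by (intro prob_spaceI) (simp add: emeasure_restrict_space space_restrict_space)

lemma product_sigma_finite_unit_interval: "product_sigma_finite (\<lambda>_. restrict_space lborel {0..1::real})"
proof -
  interpret prob_space "restrict_space lborel {0..1::real}" by (rule prob_space_unit_interval)
  show ?thesis unfolding product_sigma_finite_def by (auto intro: sigma_finite_measure)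
qed

lemma space_cube_measure: "space (cube_measure d) = cube d"
  by (simp add: cube_measure_def cube_def space_PiM space_restrict_space)

lemma prob_space_cube_measure: "prob_space (cube_measure d)"
  unfolding cube_measure_def by (rule prob_space_PiM) (rule prob_space_unit_interval)

lemma inv_exp_bounds: "1 \<le> p \<Longrightarrow> 0 \<le> inv_exp p \<and> inv_exp p \<le> 1"
  by (cases p) (auto simp: inv_exp_def)

lemma inv_exp_le_half: "2 \<le> q \<Longrightarrow> inv_exp q \<le> 1 / 2"
  by (cases q) (auto simp: inv_exp_def field_simps)

lemma real_of_ereal_ge_1: "1 \<le> p \<Longrightarrow> p \<noteq> \<infinity> \<Longrightarrow> 1 \<le> real_of_ereal p"
  by (cases p) auto

lemma esssup_ge_on_pos_measure:
  fixes f :: "'a \<Rightarrow> 'b::{second_countable_topology, dense_linorder, linorder_topology, complete_linorder}"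
  assumes E: "E \<in> sets M" and pos: "emeasure M E > 0" and ge: "\<And>x. x \<in> E \<Longrightarrow> h \<le> f x"
  shows "h \<le> esssup M f"
proof (rule ccontr)
  assume "\<not> h \<le> esssup M f"
  then have less: "esssup M f < h" by simp
  have "AE x in M. x \<notin> E"
    using esssup_AE[of f M]
  proof (rule eventually_mono)
    fix x assume "f x \<le> esssup M f"
    then show "x \<notin> E" using ge[of x] less by (meson leD order_trans)
  qed
  moreover have "{x \<in> space M. \<not> x \<notin> E} = E" using sets.sets_into_space[OF E] by auto
  ultimately have "emeasure M E = 0" using AE_iff_measurable[OF E] by simp
  then show False using pos by simp
qed

lemma convex_on_powr_nonneg:
  assumes r: "1 \<le> r" shows "convex_on {0..} (\<lambda>x::real. x powr r)"
proof (rule convex_on_linorderI)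
  fix t x y :: real
  assume t: "0 < t" "t < 1" and xy: "x \<in> {0..}" "y \<in> {0..}" "x < y"
  show "((1 - t) *\<^sub>R x + t *\<^sub>R y) powr r \<le> (1 - t) * x powr r + t * y powr r"
  proof (cases "x = 0")
    case True
    have "(t * y) powr r = t powr r * y powr r" using t xy by (simp add: powr_mult)
    also have "\<dots> \<le> t powr 1 * y powr r" using t r by (intro mult_right_mono powr_mono') auto
    finally show ?thesis using True t by simp
  next
    case False
    then show ?thesis using convex_onD[OF powr_convex[OF r], of t x y] t xy by simp
  qed
qed (rule convex_real_interval)

lemma powr_add_le_convex_split:
  fixes x y t r :: real
  assumes t: "0 < t" "t < 1" and "0 \<le> x" "0 \<le> y" and r: "1 \<le> r"
  shows "(x + y) powr r \<le> t * (x / t) powr r + (1 - t) * (y / (1 - t)) powr r"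
  using convex_onD[OF convex_on_powr_nonneg[OF r], of "1 - t" "x / t" "y / (1 - t)"] assms by simp

text \<open>Convexity of \<open>x\<^sup>r\<close> with weights \<open>A / (A + B)\<close>, \<open>B / (A + B)\<close>; the bounds \<open>A, B\<close> are
  required to be positive so that the weights stay in \<open>(0, 1)\<close>.\<close>

lemma nn_integral_powr_add_le:
  fixes F G :: "'a \<Rightarrow> real"
  assumes r: "1 \<le> r" and [measurable]: "F \<in> borel_measurable M" "G \<in> borel_measurable M"
    and F: "\<And>x. 0 \<le> F x" and G: "\<And>x. 0 \<le> G x" and A: "0 < A" and B: "0 < B"
    and IF: "(\<integral>\<^sup>+x. ennreal (F x powr r) \<partial>M) \<le> ennreal (A powr r)"
    and IG: "(\<integral>\<^sup>+x. ennreal (G x powr r) \<partial>M) \<le> ennreal (B powr r)"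
  shows "(\<integral>\<^sup>+x. ennreal ((F x + G x) powr r) \<partial>M) \<le> ennreal ((A + B) powr r)"
proof -
  define t where "t = A / (A + B)"
  have t: "0 < t" "t < 1" and At: "A / t = A + B" and Bt: "B / (1 - t) = A + B"
    using A B by (auto simp: t_def field_simps)
  define kF kG where "kF = t / t powr r" and "kG = (1 - t) / (1 - t) powr r"
  have k: "0 \<le> kF" "0 \<le> kG" using t by (auto simp: kF_def kG_def)
  have "(\<integral>\<^sup>+x. ennreal ((F x + G x) powr r) \<partial>M)
      \<le> (\<integral>\<^sup>+x. ennreal kF * ennreal (F x powr r) + ennreal kG * ennreal (G x powr r) \<partial>M)"
  proof (rule nn_integral_mono)
    fix x
    have "(F x + G x) powr r \<le> kF * F x powr r + kG * G x powr r"
      using powr_add_le_convex_split[OF t F G r] t F[of x] G[of x]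
      by (simp add: kF_def kG_def powr_divide)
    then show "ennreal ((F x + G x) powr r) \<le> ennreal kF * ennreal (F x powr r) + ennreal kG * ennreal (G x powr r)"
      using k by (simp add: ennreal_leI flip: ennreal_mult ennreal_plus)
  qed
  also have "\<dots> = ennreal kF * (\<integral>\<^sup>+x. ennreal (F x powr r) \<partial>M) + ennreal kG * (\<integral>\<^sup>+x. ennreal (G x powr r) \<partial>M)"
    by (simp add: nn_integral_add nn_integral_cmult)
  also have "\<dots> \<le> ennreal kF * ennreal (A powr r) + ennreal kG * ennreal (B powr r)"
    by (intro add_mono mult_left_mono IF IG) auto
  also have "\<dots> = ennreal (t * (A / t) powr r + (1 - t) * (B / (1 - t)) powr r)"
    using k t by (simp add: kF_def kG_def powr_divide flip: ennreal_mult ennreal_plus)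
  also have "\<dots> = ennreal ((A + B) powr r)" by (simp add: At Bt algebra_simps)
  finally show ?thesis .
qed

lemma nn_integral_powr_Minkowski:
  fixes F G :: "'a \<Rightarrow> real"
  assumes r: "1 \<le> r" and [measurable]: "F \<in> borel_measurable M" "G \<in> borel_measurable M"
    and F: "\<And>x. 0 \<le> F x" and G: "\<And>x. 0 \<le> G x" and a: "0 \<le> a" and b: "0 \<le> b"
    and IF: "(\<integral>\<^sup>+x. ennreal (F x powr r) \<partial>M) \<le> ennreal (a powr r)"
    and IG: "(\<integral>\<^sup>+x. ennreal (G x powr r) \<partial>M) \<le> ennreal (b powr r)"
  shows "(\<integral>\<^sup>+x. ennreal ((F x + G x) powr r) \<partial>M) \<le> ennreal ((a + b) powr r)"
proof -
  let ?I = "\<integral>\<^sup>+x. ennreal ((F x + G x) powr r) \<partial>M"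
  have approx: "?I \<le> ennreal ((a + b + e) powr r)" if e: "0 < e" for e
  proof -
    have le: "ennreal (a powr r) \<le> ennreal ((a + e / 2) powr r)" "ennreal (b powr r) \<le> ennreal ((b + e / 2) powr r)"
      using a b e r by (auto intro!: ennreal_leI powr_mono2)
    have "?I \<le> ennreal ((a + e / 2 + (b + e / 2)) powr r)"
      using a b e
      by (intro nn_integral_powr_add_le[OF r _ _ F G _ _ order_trans[OF IF le(1)] order_trans[OF IG le(2)]]) auto
    then show ?thesis by (simp add: algebra_simps)
  qed
  have fin: "?I \<noteq> \<infinity>" using approx[of 1] by (auto simp: top_unique)
  have "enn2real ?I powr (1 / r) \<le> a + b + e" if "0 < e" for e
  proof -
    have "enn2real ?I \<le> (a + b + e) powr r"
      using approx[OF that] a b that by (simp add: enn2real_leI)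
    then have "enn2real ?I powr (1 / r) \<le> ((a + b + e) powr r) powr (1 / r)"
      using r by (intro powr_mono2) auto
    also have "\<dots> = a + b + e" using r a b that by (simp add: powr_powr)
    finally show ?thesis .
  qed
  then have "enn2real ?I powr (1 / r) \<le> a + b" by (rule field_le_epsilon)
  then have "(enn2real ?I powr (1 / r)) powr r \<le> (a + b) powr r"
    using r by (intro powr_mono2) auto
  then have "enn2real ?I \<le> (a + b) powr r" using r by (simp add: powr_powr)
  then have "ennreal (enn2real ?I) \<le> ennreal ((a + b) powr r)" by (rule ennreal_leI)
  moreover have "ennreal (enn2real ?I) = ?I" using fin by (intro ennreal_enn2real) (simp add: less_top)
  ultimately show ?thesis by simp
qed

lemma e2ennreal_add: "0 \<le> x \<Longrightarrow> 0 \<le> y \<Longrightarrow> e2ennreal (x + y) = e2ennreal x + e2ennreal y"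
  by (cases x; cases y) (auto simp: ennreal_plus)

lemma lp_norm_finite_exponent:
  fixes f :: "(nat \<Rightarrow> real) \<Rightarrow> real" and d :: nat
  assumes "p \<noteq> \<infinity>"
  defines "I \<equiv> \<integral>\<^sup>+ x. ennreal (\<bar>f x\<bar> powr real_of_ereal p) \<partial>cube_measure d"
  shows "lp_norm p d f = (if I = \<infinity> then \<infinity> else ennreal (enn2real I powr (1 / real_of_ereal p)))"
  using assms by (simp add: lp_norm_def Let_def)

lemma lp_norm_ge_on_set:
  assumes p: "1 \<le> p" and E: "E \<in> sets (cube_measure d)" and pos: "measure (cube_measure d) E > 0"
    and h: "0 \<le> h" and ge: "\<And>x. x \<in> E \<Longrightarrow> h \<le> \<bar>f x\<bar>"
  shows "ennreal (h * measure (cube_measure d) E powr inv_exp p) \<le> lp_norm p d f"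
proof -
  let ?M = "cube_measure d"
  interpret prob_space ?M by (rule prob_space_cube_measure)
  show ?thesis
  proof (cases "p = \<infinity>")
    case True
    have "ereal h \<le> esssup ?M (\<lambda>x. ereal \<bar>f x\<bar>)"
      using E pos ge by (intro esssup_ge_on_pos_measure) (auto simp: emeasure_eq_measure)
    then have "ennreal h \<le> e2ennreal (esssup ?M (\<lambda>x. ereal \<bar>f x\<bar>))"
      using e2ennreal_mono by fastforce
    then show ?thesis using True by (simp add: lp_norm_def inv_exp_def)
  next
    case False
    define r where "r = real_of_ereal p"
    have r: "1 \<le> r" using real_of_ereal_ge_1[OF p False] by (simp add: r_def)
    define I where "I = (\<integral>\<^sup>+ x. ennreal (\<bar>f x\<bar> powr r) \<partial>?M)"
    have "ennreal (h powr r * measure ?M E) = (\<integral>\<^sup>+ x. ennreal (h powr r) * indicator E x \<partial>?M)"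
      using E by (simp add: nn_integral_cmult_indicator emeasure_eq_measure ennreal_mult)
    also have "\<dots> \<le> I"
      unfolding I_def using ge h r
      by (intro nn_integral_mono) (auto split: split_indicator intro!: ennreal_leI powr_mono2)
    finally have low: "ennreal (h powr r * measure ?M E) \<le> I" .
    show ?thesis
    proof (cases "I = \<infinity>")
      case True
      then show ?thesis using False by (simp add: lp_norm_finite_exponent I_def r_def)
    next
      case fin: False
      have "enn2real (ennreal (h powr r * measure ?M E)) \<le> enn2real I"
        using low fin by (intro enn2real_mono) (auto simp: less_top)
      then have "h powr r * measure ?M E \<le> enn2real I" by simp
      then have "(h powr r * measure ?M E) powr (1 / r) \<le> enn2real I powr (1 / r)"
        using r by (intro powr_mono2) auto
      moreover have "(h powr r * measure ?M E) powr (1 / r) = h * measure ?M E powr (1 / r)"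
        using r h by (simp add: powr_mult powr_powr)
      ultimately show ?thesis using False fin
        by (simp add: lp_norm_finite_exponent inv_exp_def ennreal_leI flip: r_def I_def)
    qed
  qed
qed

lemma lp_norm_triangle:
  assumes p: "1 \<le> p" and [measurable]: "f \<in> borel_measurable (cube_measure d)"
    "g \<in> borel_measurable (cube_measure d)"
  shows "lp_norm p d (\<lambda>x. f x + g x) \<le> lp_norm p d f + lp_norm p d g"
proof (cases "p = \<infinity>")
  case True
  let ?M = "cube_measure d"
  interpret prob_space ?M by (rule prob_space_cube_measure)
  have nonneg: "0 \<le> esssup ?M (\<lambda>x. ereal \<bar>h x\<bar>)" if [measurable]: "h \<in> borel_measurable ?M" for h
    using esssup_const[of ?M "0::ereal"] esssup_mono[of "\<lambda>x. 0" ?M "\<lambda>x. ereal \<bar>h x\<bar>"]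
    by (simp add: emeasure_space_1)
  have "esssup ?M (\<lambda>x. ereal \<bar>f x + g x\<bar>) \<le> esssup ?M (\<lambda>x. ereal \<bar>f x\<bar> + ereal \<bar>g x\<bar>)"
    by (rule esssup_mono) auto
  also have "\<dots> \<le> esssup ?M (\<lambda>x. ereal \<bar>f x\<bar>) + esssup ?M (\<lambda>x. ereal \<bar>g x\<bar>)"
    by (rule esssup_add)
  finally have "e2ennreal (esssup ?M (\<lambda>x. ereal \<bar>f x + g x\<bar>))
      \<le> e2ennreal (esssup ?M (\<lambda>x. ereal \<bar>f x\<bar>) + esssup ?M (\<lambda>x. ereal \<bar>g x\<bar>))"
    by (rule e2ennreal_mono)
  then show ?thesis using True by (simp add: lp_norm_def e2ennreal_add nonneg)
next
  case False
  define r where "r = real_of_ereal p"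
  have r: "1 \<le> r" using real_of_ereal_ge_1[OF p False] by (simp add: r_def)
  let ?I = "\<lambda>h. \<integral>\<^sup>+ x. ennreal (\<bar>h x\<bar> powr r) \<partial>cube_measure d"
  show ?thesis
  proof (cases "?I f = \<infinity> \<or> ?I g = \<infinity>")
    case True
    then show ?thesis using False by (auto simp: lp_norm_finite_exponent r_def)
  next
    case fin: False
    define a b where "a = enn2real (?I f) powr (1 / r)" and "b = enn2real (?I g) powr (1 / r)"
    have Ia: "?I f = ennreal (a powr r)" and Ib: "?I g = ennreal (b powr r)"
      using fin r by (simp_all add: a_def b_def powr_powr ennreal_enn2real_if)
    have "?I (\<lambda>x. f x + g x) \<le> (\<integral>\<^sup>+ x. ennreal ((\<bar>f x\<bar> + \<bar>g x\<bar>) powr r) \<partial>cube_measure d)"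
      using r by (intro nn_integral_mono ennreal_leI powr_mono2) auto
    also have "\<dots> \<le> ennreal ((a + b) powr r)"
      by (rule nn_integral_powr_Minkowski[OF r _ _ _ _ _ _ eq_refl[OF Ia] eq_refl[OF Ib]]) (auto simp: a_def b_def)
    finally have le: "?I (\<lambda>x. f x + g x) \<le> ennreal ((a + b) powr r)" .
    have fin_sum: "?I (\<lambda>x. f x + g x) \<noteq> \<infinity>" using le by (auto simp: top_unique)
    have "enn2real (?I (\<lambda>x. f x + g x)) powr (1 / r) \<le> ((a + b) powr r) powr (1 / r)"
      using le r by (intro powr_mono2) (auto simp: enn2real_leI)
    also have "\<dots> = a + b" using r by (simp add: a_def b_def powr_powr)
    finally show ?thesis
      using False fin fin_sum
      by (simp add: lp_norm_finite_exponent a_def b_def ennreal_leI flip: r_def ennreal_plus)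
  qed
qed

lemma lp_norm_uminus: "lp_norm p d (\<lambda>x. - f x) = lp_norm p d f"
  by (simp add: lp_norm_def)

lemma lp_dist_commute: "lp_dist p d f g = lp_dist p d g f"
  by (simp add: lp_dist_def lp_norm_def abs_minus_commute)

lemma lp_dist_triangle:
  assumes "1 \<le> p" and [measurable]: "f \<in> borel_measurable (cube_measure d)"
    "g \<in> borel_measurable (cube_measure d)" "h \<in> borel_measurable (cube_measure d)"
  shows "lp_dist p d f h \<le> lp_dist p d f g + lp_dist p d g h"
  using lp_norm_triangle[OF assms(1), of "\<lambda>x. f x - g x" d "\<lambda>x. g x - h x"]
  by (simp add: lp_dist_def)

lemma lp_dist_less_top:
  assumes p: "1 \<le> p" and "f \<in> Lp_space p d" "g \<in> Lp_space p d"
  shows "lp_dist p d f g < \<infinity>"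
proof -
  have "lp_dist p d f g \<le> lp_norm p d f + lp_norm p d (\<lambda>x. - g x)"
    using assms lp_norm_triangle[OF p, of f d "\<lambda>x. - g x"] by (simp add: lp_dist_def Lp_space_def)
  also have "\<dots> < \<infinity>" using assms by (simp add: lp_norm_uminus Lp_space_def)
  finally show ?thesis .
qed

lemma Lp_open_lp_dist_greater:
  assumes p: "1 \<le> p" and u: "u \<in> Lp_space p d"
  shows "Lp_open p d {g \<in> Lp_space p d. y < lp_dist p d u g}"
  unfolding Lp_open_def
proof (intro conjI ballI)
  fix g assume "g \<in> {g \<in> Lp_space p d. y < lp_dist p d u g}"
  then have g: "g \<in> Lp_space p d" and y: "y < lp_dist p d u g" by auto
  define t where "t = lp_dist p d u g"
  have t: "t < \<infinity>" using lp_dist_less_top[OF p u g] by (simp add: t_def)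
  have gap_fin: "t - y < \<infinity>" using t by (metis diff_le_self_ennreal le_less_trans)
  define e where "e = enn2real (t - y)"
  have gap: "ennreal e = t - y" using gap_fin by (simp add: e_def less_top)
  show "\<exists>e>0. \<forall>g'\<in>Lp_space p d. lp_dist p d g g' < ennreal e \<longrightarrow> g' \<in> {g \<in> Lp_space p d. y < lp_dist p d u g}"
  proof (intro exI[of _ e] conjI ballI impI)
    show "0 < e" using y gap_fin by (simp add: t_def e_def enn2real_positive_iff diff_gr0_ennreal less_top)
  next
    fix g' assume g': "g' \<in> Lp_space p d" and close: "lp_dist p d g g' < ennreal e"
    have "t \<le> lp_dist p d u g' + lp_dist p d g' g"
      unfolding t_def using u g g' by (intro lp_dist_triangle[OF p]) (auto simp: Lp_space_def)
    also have "\<dots> < lp_dist p d u g' + (t - y)"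
      using close gap lp_dist_less_top[OF p u g']
      by (simp add: lp_dist_commute[of p d g' g] ennreal_add_left_cancel_less less_top)
    finally have less: "t < lp_dist p d u g' + (t - y)" .
    have "y < lp_dist p d u g'"
    proof (rule ccontr)
      assume "\<not> y < lp_dist p d u g'"
      then have "lp_dist p d u g' + (t - y) \<le> y + (t - y)" by (intro add_right_mono) simp
      also have "y + (t - y) = t" using y by (simp add: t_def add_diff_inverse_ennreal less_imp_le)
      finally show False using less by simp
    qed
    then show "g' \<in> {g \<in> Lp_space p d. y < lp_dist p d u g}" using g' by simp
  qed
qed auto

lemma borel_measurable_lp_dist:
  assumes p: "1 \<le> p" and u: "u \<in> Lp_space p d"
    and open_meas: "\<And>S. Lp_open p d S \<Longrightarrow> {\<omega>\<in>space P. F \<omega> \<in> S} \<in> sets P"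
    and F: "\<And>\<omega>. \<omega> \<in> space P \<Longrightarrow> F \<omega> \<in> Lp_space p d"
  shows "(\<lambda>\<omega>. lp_dist p d u (F \<omega>)) \<in> borel_measurable P"
proof (rule borel_measurableI_greater)
  fix y
  have "{\<omega>\<in>space P. F \<omega> \<in> {g \<in> Lp_space p d. y < lp_dist p d u g}} \<in> sets P"
    by (rule open_meas[OF Lp_open_lp_dist_greater[OF p u]])
  also have "{\<omega>\<in>space P. F \<omega> \<in> {g \<in> Lp_space p d. y < lp_dist p d u g}}
      = {\<omega>\<in>space P. y < lp_dist p d u (F \<omega>)}"
    using F by auto
  finally show "{\<omega>\<in>space P. y < lp_dist p d u (F \<omega>)} \<in> sets P" .
qed

section \<open>Fooling adaptive and randomized algorithms\<close>

lemma length_sample_pts [simp]: "length (sample_pts F u n) = n"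
  by (induction n) (simp_all add: Let_def)

lemma set_sample_pts_subset: "(\<And>i xs ys. F i xs ys \<in> C) \<Longrightarrow> set (sample_pts F u n) \<subseteq> C"
  by (induction n) (auto simp: Let_def)

lemma sample_pts_cong:
  "(\<And>x. x \<in> set (sample_pts F u n) \<Longrightarrow> v x = u x) \<Longrightarrow> sample_pts F v n = sample_pts F u n"
proof (induction n)
  case (Suc n)
  then have "sample_pts F v n = sample_pts F u n" "map v (sample_pts F u n) = map u (sample_pts F u n)"
    by (auto simp: Let_def)
  then show ?case by (simp only: sample_pts.simps Let_def)
qed simp

lemma Alg_determined_by_samples:
  assumes "A \<in> Alg n U p d" and u0: "u0 \<in> U"
  obtains X where "finite X" "card X \<le> n" "X \<subseteq> cube d"
    "\<And>v. v \<in> U \<Longrightarrow> (\<And>x. x \<in> X \<Longrightarrow> v x = u0 x) \<Longrightarrow> A v = A u0"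
proof -
  obtain F Q where F: "\<And>i xs ys. F i xs ys \<in> cube d"
    and AQ: "\<And>u. u \<in> U \<Longrightarrow> A u = Q (sample_pts F u n) (map u (sample_pts F u n))"
    using assms(1) unfolding Alg_def by blast
  let ?X = "set (sample_pts F u0 n)"
  show ?thesis
  proof (rule that[of ?X])
    show "card ?X \<le> n" using card_length[of "sample_pts F u0 n"] by simp
    show "?X \<subseteq> cube d" using F by (rule set_sample_pts_subset)
  next
    fix v assume v: "v \<in> U" and agree: "\<And>x. x \<in> ?X \<Longrightarrow> v x = u0 x"
    have "sample_pts F v n = sample_pts F u0 n" using agree by (rule sample_pts_cong)
    moreover have "map v (sample_pts F u0 n) = map u0 (sample_pts F u0 n)" using agree by simp
    ultimately show "A v = A u0" using AQ[OF u0] AQ[OF v] by (simp only:)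
  qed simp
qed

lemma card_meeting_disjoint_family_le:
  assumes "finite X" and disj: "disjoint_family_on S K"
  shows "card {k\<in>K. X \<inter> S k \<noteq> {}} \<le> card X"
proof -
  let ?H = "{k\<in>K. X \<inter> S k \<noteq> {}}"
  define pick where "pick k = (SOME x. x \<in> X \<inter> S k)" for k
  have pick: "pick k \<in> X \<inter> S k" if "k \<in> ?H" for k
  proof -
    have "\<exists>x. x \<in> X \<inter> S k" using that by auto
    then show ?thesis unfolding pick_def by (rule someI_ex)
  qed
  have "inj_on pick ?H"
  proof (rule inj_onI)
    fix k k' assume k: "k \<in> ?H" and k': "k' \<in> ?H" and eq: "pick k = pick k'"
    show "k = k'"
    proof (rule ccontr)
      assume "k \<noteq> k'"
      then have "S k \<inter> S k' = {}" using disj k k' by (auto simp: disjoint_family_on_def)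
      then show False using pick[OF k] pick[OF k'] eq by auto
    qed
  qed
  then show ?thesis using pick by (intro card_inj_on_le[OF _ _ assms(1)]) auto
qed

lemma Alg_fooling_bound:
  fixes K :: "'k set" and v :: "'k \<Rightarrow> (nat \<Rightarrow> real) \<Rightarrow> real" and S :: "'k \<Rightarrow> (nat \<Rightarrow> real) set"
  assumes p: "1 \<le> p" and K: "finite K" and UL: "U \<subseteq> Lp_space p d" and u0: "u0 \<in> U"
    and vU: "\<And>k. k \<in> K \<Longrightarrow> v k \<in> U"
    and agree: "\<And>k x. k \<in> K \<Longrightarrow> x \<in> cube d \<Longrightarrow> x \<notin> S k \<Longrightarrow> v k x = u0 x"
    and disj: "disjoint_family_on S K"
    and far: "\<And>k. k \<in> K \<Longrightarrow> ennreal D \<le> lp_dist p d u0 (v k)"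
    and A: "A \<in> Alg n U p d"
  shows "of_nat (card K) * ennreal D \<le> of_nat (card K) * lp_dist p d u0 (A u0)
           + (\<Sum>k\<in>K. lp_dist p d (v k) (A (v k))) + of_nat n * ennreal D"
proof -
  obtain X where X: "finite X" "card X \<le> n" "X \<subseteq> cube d"
    and fooled: "\<And>v. v \<in> U \<Longrightarrow> (\<And>x. x \<in> X \<Longrightarrow> v x = u0 x) \<Longrightarrow> A v = A u0"
    using Alg_determined_by_samples[OF A u0] by metis
  define H where "H = {k\<in>K. X \<inter> S k \<noteq> {}}"
  have H: "H \<subseteq> K" "card H \<le> n"
    using card_meeting_disjoint_family_le[OF X(1) disj] X(2) by (auto simp: H_def)
  have A_u0: "A u0 \<in> borel_measurable (cube_measure d)" using A u0 by (simp add: Alg_def Lp_space_def)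
  have each: "ennreal D \<le> lp_dist p d u0 (A u0) + lp_dist p d (v k) (A (v k))
      + (if k \<in> H then ennreal D else 0)" if k: "k \<in> K" for k
  proof (cases "k \<in> H")
    case True
    then show ?thesis by (simp add: add_increasing)
  next
    case False
    then have "A (v k) = A u0" using k agree X(3) vU by (intro fooled) (auto simp: H_def)
    have "ennreal D \<le> lp_dist p d u0 (v k)" by (rule far[OF k])
    also have "\<dots> \<le> lp_dist p d u0 (A u0) + lp_dist p d (A u0) (v k)"
      using u0 vU[OF k] UL A_u0 by (intro lp_dist_triangle[OF p]) (auto simp: Lp_space_def)
    finally show ?thesis using False \<open>A (v k) = A u0\<close> by (simp add: lp_dist_commute[of p d "A u0"])
  qed
  have "of_nat (card K) * ennreal D = (\<Sum>k\<in>K. ennreal D)" by simp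
  also have "\<dots> \<le> (\<Sum>k\<in>K. lp_dist p d u0 (A u0) + lp_dist p d (v k) (A (v k))
      + (if k \<in> H then ennreal D else 0))"
    by (rule sum_mono) (rule each)
  also have "\<dots> = of_nat (card K) * lp_dist p d u0 (A u0) + (\<Sum>k\<in>K. lp_dist p d (v k) (A (v k)))
      + of_nat (card H) * ennreal D"
    using K H(1) by (simp add: sum.distrib sum.If_cases Int_absorb1)
  also have "\<dots> \<le> of_nat (card K) * lp_dist p d u0 (A u0) + (\<Sum>k\<in>K. lp_dist p d (v k) (A (v k)))
      + of_nat n * ennreal D"
    using H(2) by (intro add_left_mono mult_right_mono) auto
  finally show ?thesis .
qed

lemma Alg_MC_fooling_bound:
  fixes K :: "'k set" and v :: "'k \<Rightarrow> (nat \<Rightarrow> real) \<Rightarrow> real" and S :: "'k \<Rightarrow> (nat \<Rightarrow> real) set"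
    and P :: "'w measure"
  assumes p: "1 \<le> p" and K: "finite K" and UL: "U \<subseteq> Lp_space p d" and u0: "u0 \<in> U"
    and vU: "\<And>k. k \<in> K \<Longrightarrow> v k \<in> U"
    and agree: "\<And>k x. k \<in> K \<Longrightarrow> x \<in> cube d \<Longrightarrow> x \<notin> S k \<Longrightarrow> v k x = u0 x"
    and disj: "disjoint_family_on S K"
    and far: "\<And>k. k \<in> K \<Longrightarrow> ennreal D \<le> lp_dist p d u0 (v k)"
    and alg: "(P, A, mm) \<in> Alg_MC m U p d"
  shows "of_nat (card K) * ennreal D
           \<le> 2 * of_nat (card K) * mc_worst_error P A U p d + of_nat m * ennreal D"
proof -
  have "prob_space P" and mm[measurable]: "mm \<in> measurable P (count_space UNIV)"
    and E_mm: "(\<integral>\<^sup>+ \<omega>. ennreal (real (mm \<omega>)) \<partial>P) \<le> ennreal (real m)"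
    and open_meas: "\<And>u S. u \<in> U \<Longrightarrow> Lp_open p d S \<Longrightarrow> {\<omega>\<in>space P. A \<omega> u \<in> S} \<in> sets P"
    and algs: "\<And>\<omega>. \<omega> \<in> space P \<Longrightarrow> A \<omega> \<in> Alg (mm \<omega>) U p d"
    using alg by (auto simp: Alg_MC_def)
  interpret prob_space P by fact
  define E where "E = mc_worst_error P A U p d"
  define e where "e u = (\<integral>\<^sup>+ \<omega>. lp_dist p d u (A \<omega> u) \<partial>P)" for u
  have e_le: "e u \<le> E" if "u \<in> U" for u
    unfolding E_def e_def mc_worst_error_def using that by (rule SUP_upper)
  have [measurable]: "(\<lambda>\<omega>. lp_dist p d u (A \<omega> u)) \<in> borel_measurable P" if "u \<in> U" for u
    using p UL that open_meas algs by (intro borel_measurable_lp_dist) (auto simp: Alg_def)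
  let ?K = "of_nat (card K) :: ennreal"
  have "?K * ennreal D = (\<integral>\<^sup>+ \<omega>. ?K * ennreal D \<partial>P)"
    by (simp add: emeasure_space_1)
  also have "\<dots> \<le> (\<integral>\<^sup>+ \<omega>. ?K * lp_dist p d u0 (A \<omega> u0)
       + (\<Sum>k\<in>K. lp_dist p d (v k) (A \<omega> (v k))) + ennreal D * ennreal (real (mm \<omega>)) \<partial>P)"
    using Alg_fooling_bound[OF p K UL u0 vU agree disj far algs]
    by (intro nn_integral_mono) (simp add: ennreal_of_nat_eq_real_of_nat mult.commute)
  also have "\<dots> = ?K * e u0 + (\<Sum>k\<in>K. e (v k)) + ennreal D * (\<integral>\<^sup>+ \<omega>. ennreal (real (mm \<omega>)) \<partial>P)"
    using u0 vU unfolding e_def by (simp add: nn_integral_add nn_integral_cmult nn_integral_sum)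
  also have "\<dots> \<le> ?K * E + ?K * E + ennreal D * ennreal (real m)"
  proof (intro add_mono mult_left_mono)
    show "(\<Sum>k\<in>K. e (v k)) \<le> ?K * E"
      using sum_mono[of K "\<lambda>k. e (v k)" "\<lambda>_. E"] e_le vU by simp
  qed (use e_le u0 E_mm in auto)
  finally show ?thesis by (simp add: E_def mult_2 ennreal_of_nat_eq_real_of_nat algebra_simps)
qed

lemma err_MC_ge_fooling:
  fixes K :: "'k set" and v :: "'k \<Rightarrow> (nat \<Rightarrow> real) \<Rightarrow> real" and S :: "'k \<Rightarrow> (nat \<Rightarrow> real) set"
  assumes p: "1 \<le> p" and K: "finite K" and UL: "U \<subseteq> Lp_space p d" and u0: "u0 \<in> U"
    and vU: "\<And>k. k \<in> K \<Longrightarrow> v k \<in> U"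
    and agree: "\<And>k x. k \<in> K \<Longrightarrow> x \<in> cube d \<Longrightarrow> x \<notin> S k \<Longrightarrow> v k x = u0 x"
    and disj: "disjoint_family_on S K"
    and far: "\<And>k. k \<in> K \<Longrightarrow> ennreal D \<le> lp_dist p d u0 (v k)"
    and many: "K \<noteq> {}" "2 * m \<le> card K" and D: "0 \<le> D"
  shows "ennreal (D / 4) \<le> err_MC TYPE('w) m U p d"
  unfolding err_MC_def
proof (rule INF_greatest, clarify)
  fix P :: "'w measure" and A mm
  assume alg: "(P, A, mm) \<in> Alg_MC m U p d"
  show "ennreal (D / 4) \<le> mc_worst_error P A U p d"
  proof (cases "mc_worst_error P A U p d")
    case (real e)
    have bound: "of_nat (card K) * ennreal D \<le> 2 * of_nat (card K) * ennreal e + of_nat m * ennreal D"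
      using Alg_MC_fooling_bound[OF p K UL u0 vU agree disj far alg] real by simp
    have "ennreal (real (card K) * D) = of_nat (card K) * ennreal D"
      and "ennreal (2 * real (card K) * e + real m * D) = 2 * of_nat (card K) * ennreal e + of_nat m * ennreal D"
      using real D by (simp_all add: ennreal_plus ennreal_mult ennreal_of_nat_eq_real_of_nat)
    then have "ennreal (real (card K) * D) \<le> ennreal (2 * real (card K) * e + real m * D)"
      using bound by (simp only:)
    then have "real (card K) * D \<le> 2 * real (card K) * e + real m * D"
      using real D by (subst (asm) ennreal_le_iff) auto
    moreover have "real m * D \<le> real (card K) / 2 * D" using many D by (intro mult_right_mono) auto
    ultimately have "real (card K) * (D / 4) \<le> real (card K) * e" by simp
    then show ?thesis using real K many by (simp add: ennreal_leI card_gt_0_iff)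
  qed simp
qed

section \<open>Hat functions on a grid\<close>

lemma relu_nonneg: "0 \<le> relu x"
  by (simp add: relu_def)

lemma relu_of_nonneg: "0 \<le> x \<Longrightarrow> relu x = x"
  by (simp add: relu_def)

lemma relu_add_relu_uminus: "relu a + relu (- a) = \<bar>a\<bar>"
  by (simp add: relu_def)

lemma relu_mult_nonneg: "0 \<le> k \<Longrightarrow> relu (k * a) = k * relu a"
  by (simp add: relu_def max_mult_distrib_left)

definition hat :: "nat \<Rightarrow> real \<Rightarrow> (nat \<Rightarrow> real) \<Rightarrow> (nat \<Rightarrow> real) \<Rightarrow> real" where
  "hat s rho a x = relu (rho - (\<Sum>j<s. \<bar>x j - a j\<bar>))"

definition hat_support :: "nat \<Rightarrow> real \<Rightarrow> (nat \<Rightarrow> real) \<Rightarrow> (nat \<Rightarrow> real) set" where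
  "hat_support s rho a = {x. \<forall>j<s. \<bar>x j - a j\<bar> < rho}"

definition core_box :: "nat \<Rightarrow> nat \<Rightarrow> real \<Rightarrow> (nat \<Rightarrow> real) \<Rightarrow> (nat \<Rightarrow> real) set" where
  "core_box d s r a = PiE {..<d} (\<lambda>j. if j < s then {a j - r .. a j + r} else {0..1})"

lemma hat_eq_0: "x \<notin> hat_support s rho a \<Longrightarrow> hat s rho a x = 0"
proof -
  assume "x \<notin> hat_support s rho a"
  then obtain j where j: "j < s" "rho \<le> \<bar>x j - a j\<bar>" by (auto simp: hat_support_def not_less)
  have "\<bar>x j - a j\<bar> \<le> (\<Sum>j<s. \<bar>x j - a j\<bar>)" using j(1) by (intro member_le_sum) auto
  then show ?thesis using j(2) by (simp add: hat_def relu_def)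
qed

lemma hat_ge_on_core_box:
  assumes s: "0 < s" "s \<le> d" and x: "x \<in> core_box d s (rho / (2 * real s)) a"
  shows "rho / 2 \<le> hat s rho a x"
proof -
  have "\<bar>x j - a j\<bar> \<le> rho / (2 * real s)" if "j < s" for j
    using that s PiE_mem[OF x[unfolded core_box_def], of j] by (simp add: abs_le_iff)
  then have "(\<Sum>j<s. \<bar>x j - a j\<bar>) \<le> (\<Sum>j<s. rho / (2 * real s))" by (intro sum_mono) auto
  also have "\<dots> = rho / 2" using s by simp
  finally show ?thesis by (simp add: hat_def relu_def le_max_iff_disj)
qed

lemma core_box_in_cube:
  assumes s: "s \<le> d" and r: "0 \<le> r" and a: "\<And>j. j < s \<Longrightarrow> 0 \<le> a j - r \<and> a j + r \<le> 1"
  shows "core_box d s r a \<subseteq> cube d" "core_box d s r a \<in> sets (cube_measure d)"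
    "measure (cube_measure d) (core_box d s r a) = (2 * r) ^ s"
proof -
  let ?I = "restrict_space lborel {0..1::real}"
  define F where "F j = (if j < s then {a j - r .. a j + r} else {0..1::real})" for j
  have F: "F j \<subseteq> {0..1}" "F j \<in> sets ?I" for j
    using a[of j] by (auto simp: F_def sets_restrict_space_iff)
  have box: "core_box d s r a = PiE {..<d} F" unfolding core_box_def by (rule PiE_cong) (simp add: F_def)
  show "core_box d s r a \<subseteq> cube d" unfolding box cube_def using F by (intro PiE_mono) auto
  show "core_box d s r a \<in> sets (cube_measure d)"
    unfolding box cube_measure_def using F by (intro sets_PiM_I_finite) auto
  have "emeasure ?I (F j) = (if j < s then ennreal (2 * r) else 1)" for j
    using F(1)[of j] r by (auto simp: F_def emeasure_restrict_space)
  then have "emeasure (cube_measure d) (core_box d s r a) = (\<Prod>j<d. if j < s then ennreal (2 * r) else 1)"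
    unfolding box cube_measure_def using F
    by (simp add: product_sigma_finite.emeasure_PiM[OF product_sigma_finite_unit_interval])
  also have "\<dots> = ennreal ((2 * r) ^ s)"
  proof -
    have "{..<d} \<inter> {j. j < s} = {..<s}" using s by auto
    then show ?thesis using r by (simp add: prod.If_cases ennreal_power)
  qed
  finally show "measure (cube_measure d) (core_box d s r a) = (2 * r) ^ s"
    using r by (simp add: measure_def)
qed

lemma lp_dist_ge_hat:
  assumes p: "1 \<le> p" and s: "0 < s" "s \<le> d" and c0: "0 \<le> c0" and g: "0 \<le> g" and rho: "0 < rho"
    and a: "\<And>j. j < s \<Longrightarrow> 0 \<le> a j - rho / (2 * real s) \<and> a j + rho / (2 * real s) \<le> 1"
    and v: "\<And>x. x \<in> cube d \<Longrightarrow> v x = u0 x + c0 * (g * hat s rho a x)"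
  shows "ennreal (c0 * (g * (rho / 2)) * ((rho / real s) ^ s) powr inv_exp p) \<le> lp_dist p d u0 v"
proof -
  let ?E = "core_box d s (rho / (2 * real s)) a"
  have r: "0 \<le> rho / (2 * real s)" using rho by simp
  note E = core_box_in_cube[where a = a, OF s(2) r a]
  have E_measure: "measure (cube_measure d) ?E = (rho / real s) ^ s" using E(3) rho by simp
  have "ennreal (c0 * (g * (rho / 2)) * measure (cube_measure d) ?E powr inv_exp p) \<le> lp_norm p d (\<lambda>x. u0 x - v x)"
  proof (rule lp_norm_ge_on_set[OF p])
    show "?E \<in> sets (cube_measure d)" "0 < measure (cube_measure d) ?E"
      using E rho s by (simp_all add: E_measure)
    show "0 \<le> c0 * (g * (rho / 2))" using c0 g rho by simp
  next
    fix x assume x: "x \<in> ?E"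
    then have "x \<in> cube d" using E(1) rho by auto
    have "rho / 2 \<le> hat s rho a x" using s x by (intro hat_ge_on_core_box) auto
    then have "c0 * (g * (rho / 2)) \<le> c0 * (g * hat s rho a x)"
      using c0 g by (intro mult_left_mono) auto
    also have "\<dots> = \<bar>u0 x - v x\<bar>" using v[OF \<open>x \<in> cube d\<close>] c0 g by (simp add: hat_def relu_nonneg)
    finally show "c0 * (g * (rho / 2)) \<le> \<bar>u0 x - v x\<bar>" .
  qed
  then show ?thesis by (simp add: E_measure lp_dist_def)
qed

definition grid :: "nat \<Rightarrow> nat \<Rightarrow> (nat \<Rightarrow> nat) set" where
  "grid s N = PiE {..<s} (\<lambda>_. {..<N})"

definition grid_center :: "nat \<Rightarrow> (nat \<Rightarrow> nat) \<Rightarrow> nat \<Rightarrow> real" where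
  "grid_center N k j = (real (k j) + 1 / 2) / real N"

lemma grid_center_bounds:
  assumes N: "1 \<le> N" and k: "k \<in> grid s N" and j: "j < s"
  shows "1 / (2 * real N) \<le> grid_center N k j" "grid_center N k j + 1 / (2 * real N) \<le> 1"
proof -
  have "Suc (k j) \<le> N" using k j by (auto simp: grid_def PiE_def Pi_def Suc_le_eq)
  then have "real (k j) + 1 \<le> real N" using of_nat_le_iff[of "Suc (k j)" N] by simp
  then show "1 / (2 * real N) \<le> grid_center N k j" "grid_center N k j + 1 / (2 * real N) \<le> 1"
    using N by (simp_all add: grid_center_def field_simps)
qed

lemma disjoint_family_on_grid_hat_support:
  assumes N: "1 \<le> N"
  shows "disjoint_family_on (\<lambda>k. hat_support s (1 / (2 * real N)) (grid_center N k)) (grid s N)"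
  unfolding disjoint_family_on_def
proof (intro ballI impI, rule ccontr)
  fix k k' assume k: "k \<in> grid s N" and k': "k' \<in> grid s N" and "k \<noteq> k'"
    and "hat_support s (1 / (2 * real N)) (grid_center N k) \<inter> hat_support s (1 / (2 * real N)) (grid_center N k') \<noteq> {}"
  then obtain x where x: "x \<in> hat_support s (1 / (2 * real N)) (grid_center N k)"
    "x \<in> hat_support s (1 / (2 * real N)) (grid_center N k')" by blast
  obtain j where j: "j < s" "k j \<noteq> k' j"
    using \<open>k \<noteq> k'\<close> PiE_ext[OF k[unfolded grid_def] k'[unfolded grid_def]] by auto
  have x: "\<bar>x j - grid_center N k j\<bar> < 1 / (2 * real N)" "\<bar>x j - grid_center N k' j\<bar> < 1 / (2 * real N)"
    using x j(1) by (auto simp: hat_support_def)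
  have "\<bar>grid_center N k j - grid_center N k' j\<bar> < 1 / real N" using x by (simp add: abs_diff_less_iff)
  then have "\<bar>real (k j) - real (k' j)\<bar> / real N < 1 / real N"
    by (simp add: grid_center_def diff_divide_distrib[symmetric])
  then have "\<bar>real (k j) - real (k' j)\<bar> < 1" using N by (simp add: divide_less_cancel)
  then show False using j(2) by linarith
qed

lemma grid_size_bounds:
  fixes m s :: nat
  assumes m: "1 \<le> m" and s: "1 \<le> s"
  defines "N \<equiv> nat \<lceil>(2 * real m) powr (1 / real s)\<rceil>"
  shows "1 \<le> N" "2 * m \<le> N ^ s" "real N \<le> 4 * real m powr (1 / real s)"
proof -
  define x where "x = (2 * real m) powr (1 / real s)"
  have x1: "1 \<le> x" unfolding x_def using m s by (intro ge_one_powr_ge_zero) auto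
  have Nx: "real N = real_of_int \<lceil>x\<rceil>" using x1 by (simp add: N_def x_def)
  show "1 \<le> N" using x1 Nx by linarith
  have "x ^ s \<le> real N ^ s" using x1 Nx by (intro power_mono) linarith+
  moreover have "x ^ s = 2 * real m" unfolding x_def using m s by (simp add: powr_realpow[symmetric] powr_powr)
  ultimately have "real (2 * m) \<le> real (N ^ s)" by simp
  then show "2 * m \<le> N ^ s" by (simp only: of_nat_le_iff)
  have "real N \<le> 2 * x" using Nx x1 by linarith
  also have "x = 2 powr (1 / real s) * real m powr (1 / real s)" unfolding x_def by (simp add: powr_mult)
  also have "2 powr (1 / real s) \<le> 2 powr 1" using s by (intro powr_mono) auto
  finally show "real N \<le> 4 * real m powr (1 / real s)" by (simp add: mult_right_mono)
qed

lemma grid_rate_bound: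
  fixes g ip :: real and N m s :: nat
  assumes g: "0 \<le> g" and s: "1 \<le> s" and N: "1 \<le> N" and m: "1 \<le> m"
    and Nm: "real N \<le> 4 * real m powr (1 / real s)" and ip: "0 \<le> ip"
  shows "g * real s / (64 * real s) powr (1 + real s * ip) * real m powr (- ip - 1 / real s)
           \<le> g / (16 * real N) * ((1 / (2 * real N * real s)) ^ s) powr ip"
proof -
  define M where "M = real m powr (1 / real s)"
  have M: "0 < M" and Mp: "M powr (real s * ip) = real m powr ip"
    using m s by (simp_all add: M_def powr_powr)
  have "(2 * real N * real s) powr (real s * ip) \<le> (8 * real s * M) powr (real s * ip)"
    using Nm s ip by (intro powr_mono2) (auto simp: M_def)
  also have "\<dots> = (8 * real s) powr (real s * ip) * real m powr ip" using s M by (simp add: powr_mult Mp)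
  also have "\<dots> \<le> (64 * real s) powr (real s * ip) * real m powr ip"
    using s ip by (intro mult_right_mono powr_mono2) auto
  finally have pw: "(2 * real N * real s) powr (real s * ip)
      \<le> (64 * real s) powr (real s * ip) * real m powr ip" .
  have "16 * real N * (2 * real N * real s) powr (real s * ip)
      \<le> 64 * M * ((64 * real s) powr (real s * ip) * real m powr ip)"
    by (rule mult_mono[OF _ pw]) (use Nm N in \<open>auto simp: M_def\<close>)
  then have "g / (64 * M * ((64 * real s) powr (real s * ip) * real m powr ip))
      \<le> g / (16 * real N * (2 * real N * real s) powr (real s * ip))"
    using g N s m M by (intro divide_left_mono) (auto intro!: mult_pos_pos)
  moreover have "g * real s / (64 * real s) powr (1 + real s * ip) * real m powr (- ip - 1 / real s)
      = g / (64 * M * ((64 * real s) powr (real s * ip) * real m powr ip))"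
  proof -
    have "real m powr (- ip - 1 / real s) = real m powr (- (ip + 1 / real s))" by simp
    also have "\<dots> = 1 / real m powr (ip + 1 / real s)" by (rule powr_minus_divide)
    also have "\<dots> = 1 / (real m powr ip * M)" by (simp add: M_def powr_add)
    finally have "real m powr (- ip - 1 / real s) = 1 / (real m powr ip * M)" .
    moreover have "(64 * real s) powr (1 + real s * ip) = 64 * real s * (64 * real s) powr (real s * ip)"
      using s by (simp add: powr_add)
    ultimately show ?thesis using s m M by (simp add: field_simps)
  qed
  moreover have "((1 / (2 * real N * real s)) ^ s) powr ip = 1 / (2 * real N * real s) powr (real s * ip)"
    using N s by (simp add: power_one_over powr_realpow[symmetric] powr_powr powr_divide)
  ultimately show ?thesis by simp
qed

lemma err_MC_ge_hats:
  assumes p: "1 \<le> p" and m: "1 \<le> m" and s: "1 \<le> s" "s \<le> d" and c0: "0 < c0" and g: "0 \<le> g"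
    and UL: "U \<subseteq> Lp_space p d" and u0: "u0 \<in> U"
    and hats: "\<And>rho a. 0 < rho \<Longrightarrow> rho \<le> 1 \<Longrightarrow> (\<And>j. j < s \<Longrightarrow> 0 \<le> a j \<and> a j \<le> 1) \<Longrightarrow>
      \<exists>v\<in>U. \<forall>x\<in>cube d. v x = u0 x + c0 * (g * hat s rho a x)"
  shows "ennreal (c0 * (g * real s) / (64 * real s) powr (1 + real s * inv_exp p)
           * real m powr (- inv_exp p - 1 / real s)) \<le> err_MC TYPE('w) m U p d"
proof -
  define N where "N = nat \<lceil>(2 * real m) powr (1 / real s)\<rceil>"
  have N: "1 \<le> N" "2 * m \<le> N ^ s" "real N \<le> 4 * real m powr (1 / real s)"
    using grid_size_bounds[OF m s(1)] by (simp_all add: N_def)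
  define rho where "rho = 1 / (2 * real N)"
  have rho: "0 < rho" "rho \<le> 1" using N(1) by (auto simp: rho_def)
  have center: "0 \<le> grid_center N k j - rho / (2 * real s) \<and> grid_center N k j + rho / (2 * real s) \<le> 1"
    "0 \<le> grid_center N k j \<and> grid_center N k j \<le> 1" if "k \<in> grid s N" "j < s" for k j
  proof -
    have "rho / (2 * real s) \<le> rho" using s rho by (simp add: field_simps)
    then show "0 \<le> grid_center N k j - rho / (2 * real s) \<and> grid_center N k j + rho / (2 * real s) \<le> 1"
      "0 \<le> grid_center N k j \<and> grid_center N k j \<le> 1"
      using grid_center_bounds[OF N(1) that, folded rho_def] rho by auto
  qed
  have "\<forall>k\<in>grid s N. \<exists>v\<in>U. \<forall>x\<in>cube d. v x = u0 x + c0 * (g * hat s rho (grid_center N k) x)"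
    using hats[OF rho] center(2) by blast
  then obtain V where V: "\<And>k. k \<in> grid s N \<Longrightarrow> V k \<in> U"
    and Vx: "\<And>k x. k \<in> grid s N \<Longrightarrow> x \<in> cube d \<Longrightarrow> V k x = u0 x + c0 * (g * hat s rho (grid_center N k) x)"
    by metis
  define D where "D = c0 * (g * (rho / 2)) * ((rho / real s) ^ s) powr inv_exp p"
  have far: "ennreal D \<le> lp_dist p d u0 (V k)" if "k \<in> grid s N" for k
    unfolding D_def using s c0 g rho center(1)[OF that] Vx[OF that]
    by (intro lp_dist_ge_hat[where a = "grid_center N k", OF p]) auto
  have "ennreal (D / 4) \<le> err_MC TYPE('w) m U p d"
  proof (rule err_MC_ge_fooling[OF p _ UL u0 V _ disjoint_family_on_grid_hat_support[OF N(1)] far])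
    show "finite (grid s N)" by (simp add: grid_def finite_PiE)
    show "grid s N \<noteq> {}" "2 * m \<le> card (grid s N)"
      using N by (auto simp: grid_def card_PiE PiE_eq_empty_iff lessThan_empty_iff)
    show "0 \<le> D" using c0 g rho by (simp add: D_def)
    show "V k x = u0 x" if "k \<in> grid s N" "x \<in> cube d" "x \<notin> hat_support s (1 / (2 * real N)) (grid_center N k)"
      for k x using that by (simp add: Vx hat_eq_0 rho_def)
  qed
  moreover have "c0 * (g * real s) / (64 * real s) powr (1 + real s * inv_exp p)
      * real m powr (- inv_exp p - 1 / real s) \<le> D / 4"
    using mult_left_mono[OF grid_rate_bound[OF g s(1) N(1) m N(3)] less_imp_le[OF c0]] inv_exp_bounds[OF p]
    by (simp add: D_def rho_def field_simps)
  ultimately show ?thesis by (meson ennreal_leI order_trans)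
qed

section \<open>Hat functions as ReLU networks with bounded weights\<close>

lemma sum_lessThan_mult_mod_div:
  fixes a b :: nat
  assumes "0 < a"
  shows "(\<Sum>k<a * b. F (k mod a) (k div a)) = (\<Sum>i<b. \<Sum>j<a. F j i)"
proof -
  have "(\<Sum>k<b * a. F (k mod a) (k div a)) = (\<Sum>i<b. \<Sum>k\<in>{i * a..<i * a + a}. F (k mod a) (k div a))"
    by (rule sum.nat_group[symmetric])
  also have "\<dots> = (\<Sum>i<b. \<Sum>j<a. F j i)"
  proof (rule sum.cong[OF refl])
    fix i
    have "(\<Sum>k\<in>{0 + i * a..<a + i * a}. F (k mod a) (k div a))
        = (\<Sum>j\<in>{0..<a}. F ((j + i * a) mod a) ((j + i * a) div a))"
      by (rule sum.shift_bounds_nat_ivl)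
    also have "\<dots> = (\<Sum>j<a. F j i)"
      using assms by (auto simp: atLeast0LessThan intro: sum.cong)
    finally show "(\<Sum>k\<in>{i * a..<i * a + a}. F (k mod a) (k div a)) = (\<Sum>j<a. F j i)"
      by (simp add: add.commute)
  qed
  finally show ?thesis by (simp add: mult.commute)
qed

lemma sum_lessThan_if_less:
  fixes R B :: nat
  assumes "R \<le> B"
  shows "(\<Sum>k<B. if k < R then f k else 0) = (\<Sum>k<R. f k)"
proof -
  have "{..<B} \<inter> {k. k < R} = {..<R}" using assms by auto
  then show ?thesis by (simp add: sum.If_cases)
qed

definition const_block :: "nat \<Rightarrow> nat \<Rightarrow> real \<Rightarrow> nat \<Rightarrow> nat \<Rightarrow> real" where
  "const_block R1 R2 a i j = (if i < R1 \<and> j < R2 then a else 0)"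

lemma realize_const_blocks:
  assumes RB: "R \<le> B" and mu: "0 \<le> mu"
  shows "0 \<le> z \<Longrightarrow> (\<And>r. r < B \<Longrightarrow> y r = (if r < R then z else 0)) \<Longrightarrow>
    realize (replicate (Suc n) B @ [1]) (replicate n (const_block R R mu, \<lambda>_. 0) @ [(const_block 1 R la, \<lambda>_. 0)]) y 0
      = real R * la * (real R * mu) ^ n * z"
proof (induction n arbitrary: y z)
  case 0
  have "(\<Sum>j<B. const_block 1 R la 0 j * y j) = (\<Sum>j<B. if j < R then la * z else 0)"
    using 0 by (intro sum.cong) (auto simp: const_block_def)
  then show ?case using RB by (simp add: affine_def sum_lessThan_if_less)
next
  case (Suc n)
  let ?y = "\<lambda>i. relu (affine (const_block R R mu) (\<lambda>_. 0) B y i)"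
  have "?y r = (if r < R then real R * mu * z else 0)" if "r < B" for r
  proof -
    have "(\<Sum>j<B. const_block R R mu r j * y j) = (\<Sum>j<B. if j < R then (if r < R then mu * z else 0) else 0)"
      using Suc.prems by (intro sum.cong) (auto simp: const_block_def)
    then show ?thesis
      using Suc.prems mu RB by (simp add: affine_def sum_lessThan_if_less relu_of_nonneg)
  qed
  then have "realize (replicate (Suc n) B @ [1]) (replicate n (const_block R R mu, \<lambda>_. 0)
      @ [(const_block 1 R la, \<lambda>_. 0)]) ?y 0 = real R * la * (real R * mu) ^ n * (real R * mu * z)"
    using Suc.prems mu by (intro Suc.IH) auto
  then show ?case by (simp add: algebra_simps)
qed

text \<open>The first hidden layer has \<open>n = 3 s R\<^sub>1\<close> active units; unit \<open>r\<close> looks at coordinate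
  \<open>j = r mod s\<close> and, according to \<open>(r div s) mod 3\<close>, computes \<open>\<beta>\<close>, \<open>relu (w (x\<^sub>j - a\<^sub>j))\<close> or
  \<open>relu (- w (x\<^sub>j - a\<^sub>j))\<close>. The second layer adds these with signs \<open>+, -, -\<close>, which yields
  \<open>R\<^sub>1\<close> copies of \<open>\<Sum>\<^sub>j (\<beta> - w \<bar>x\<^sub>j - a\<^sub>j\<bar>)\<close>; spreading the hat over many small weights
  keeps their \<open>\<ell>\<^sup>q\<close> norms small.\<close>

definition abs_layer_weights :: "nat \<Rightarrow> nat \<Rightarrow> real \<Rightarrow> nat \<Rightarrow> nat \<Rightarrow> real" where
  "abs_layer_weights s n w r j = (if r < n \<and> j = r mod s then
      (if (r div s) mod 3 = 1 then w else if (r div s) mod 3 = 2 then - w else 0) else 0)"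

definition abs_layer_bias :: "nat \<Rightarrow> nat \<Rightarrow> real \<Rightarrow> real \<Rightarrow> (nat \<Rightarrow> real) \<Rightarrow> nat \<Rightarrow> real" where
  "abs_layer_bias s n w beta a r = (if r < n then
      (if (r div s) mod 3 = 0 then beta else if (r div s) mod 3 = 1 then - w * a (r mod s)
       else w * a (r mod s)) else 0)"

definition sum_layer_weights :: "nat \<Rightarrow> nat \<Rightarrow> nat \<Rightarrow> real \<Rightarrow> nat \<Rightarrow> nat \<Rightarrow> real" where
  "sum_layer_weights s n R v r k = (if r < R \<and> k < n then (if (k div s) mod 3 = 0 then v else - v) else 0)"

definition hat_net ::
    "nat \<Rightarrow> nat \<Rightarrow> nat \<Rightarrow> nat \<Rightarrow> real \<Rightarrow> real \<Rightarrow> (nat \<Rightarrow> real) \<Rightarrow> real \<Rightarrow> real \<Rightarrow> real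
      \<Rightarrow> ((nat \<Rightarrow> nat \<Rightarrow> real) \<times> (nat \<Rightarrow> real)) list" where
  "hat_net L s n R w beta a v mu la =
     (abs_layer_weights s n w, abs_layer_bias s n w beta a) # (sum_layer_weights s n R v, \<lambda>_. 0)
       # replicate (L - 3) (const_block R R mu, \<lambda>_. 0) @ [(const_block 1 R la, \<lambda>_. 0)]"

lemma abs_layer_output:
  assumes "0 < s" "s \<le> d" "0 \<le> beta"
  shows "relu (affine (abs_layer_weights s n w) (abs_layer_bias s n w beta a) d x r) =
    (if r < n then (if (r div s) mod 3 = 0 then beta
       else relu ((if (r div s) mod 3 = 1 then w else - w) * (x (r mod s) - a (r mod s)))) else 0)"
proof (cases "r < n")
  case True
  define co where "co = (if (r div s) mod 3 = 1 then w else if (r div s) mod 3 = 2 then - w else 0)"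
  have "r mod s < d" using assms by (meson mod_less_divisor order_less_le_trans)
  then have "(\<Sum>j<d. abs_layer_weights s n w r j * x j) = co * x (r mod s)"
    using True by (simp add: abs_layer_weights_def co_def if_distrib[of "\<lambda>c. c * _"] sum.delta' cong: if_cong)
  moreover have "(r div s) mod 3 = 0 \<or> (r div s) mod 3 = 1 \<or> (r div s) mod 3 = 2" by linarith
  ultimately show ?thesis
    using True assms by (auto simp: affine_def abs_layer_bias_def co_def relu_of_nonneg algebra_simps)
qed (simp add: affine_def abs_layer_weights_def abs_layer_bias_def relu_def)

lemma sum_layer_output:
  assumes s: "0 < s" "s \<le> d" and n: "n = s * (3 * R1)" "n \<le> B" and w: "0 \<le> w" and beta: "0 \<le> beta"
    and r: "r < R"
  shows "(\<Sum>k<B. sum_layer_weights s n R v r k * relu (affine (abs_layer_weights s n w) (abs_layer_bias s n w beta a) d x k))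
    = v * real R1 * (\<Sum>j<s. beta - w * \<bar>x j - a j\<bar>)"
proof -
  define G where "G j t = (if t = 0 then v * beta
    else - v * relu ((if t = 1 then w else - w) * (x j - a j)))" for j t :: nat
  have G: "G j 0 + G j 1 + G j 2 = v * (beta - w * \<bar>x j - a j\<bar>)" for j
  proof -
    have "relu (w * (x j - a j)) + relu (- (w * (x j - a j))) = w * \<bar>x j - a j\<bar>"
      using relu_add_relu_uminus[of "w * (x j - a j)"] w by (simp add: abs_mult)
    moreover have "G j 0 + G j 1 + G j 2 = v * beta - v * (relu (w * (x j - a j)) + relu (- (w * (x j - a j))))"
      by (simp add: G_def algebra_simps)
    ultimately show ?thesis by (simp add: algebra_simps)
  qed
  have "(\<Sum>k<B. sum_layer_weights s n R v r k * relu (affine (abs_layer_weights s n w) (abs_layer_bias s n w beta a) d x k))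
      = (\<Sum>k<B. if k < n then G (k mod s) ((k div s) mod 3) else 0)"
    using r s beta by (intro sum.cong) (auto simp: sum_layer_weights_def abs_layer_output G_def)
  also have "\<dots> = (\<Sum>k<s * (3 * R1). G (k mod s) ((k div s) mod 3))" using n by (simp add: sum_lessThan_if_less)
  also have "\<dots> = (\<Sum>i<3 * R1. \<Sum>j<s. G j (i mod 3))"
    using sum_lessThan_mult_mod_div[OF s(1), of "\<lambda>j i. G j (i mod 3)"] by simp
  also have "\<dots> = (\<Sum>i<R1. \<Sum>t<3. \<Sum>j<s. G j t)"
    using sum_lessThan_mult_mod_div[of 3 "\<lambda>t i. \<Sum>j<s. G j t" R1] by simp
  also have "\<dots> = real R1 * (\<Sum>j<s. G j 0 + G j 1 + G j 2)"
    by (simp add: numeral_3_eq_3 numeral_2_eq_2 sum.distrib)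
  also have "\<dots> = v * real R1 * (\<Sum>j<s. beta - w * \<bar>x j - a j\<bar>)"
    unfolding G by (simp add: sum_distrib_left mult.left_commute mult.assoc)
  finally show ?thesis .
qed

lemma realize_hat_net:
  assumes s: "0 < s" "s \<le> d" and n: "n = s * (3 * R1)" "n \<le> B" and RB: "R \<le> B" and L: "3 \<le> L"
    and nonneg: "0 \<le> w" "0 \<le> beta" "0 \<le> v" "0 \<le> mu"
  shows "realize (d # replicate (L - 1) B @ [1]) (hat_net L s n R w beta a v mu la) x 0
    = real R * la * (real R * mu) ^ (L - 3) * relu (v * real R1 * (\<Sum>j<s. beta - w * \<bar>x j - a j\<bar>))"
proof -
  let ?y1 = "\<lambda>r. relu (affine (abs_layer_weights s n w) (abs_layer_bias s n w beta a) d x r)"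
  let ?y2 = "\<lambda>r. relu (affine (sum_layer_weights s n R v) (\<lambda>_. 0) B ?y1 r)"
  let ?z = "relu (v * real R1 * (\<Sum>j<s. beta - w * \<bar>x j - a j\<bar>))"
  have y2: "?y2 r = (if r < R then ?z else 0)" for r
    using sum_layer_output[OF s n nonneg(1,2), of r R v a x]
    by (simp add: affine_def[of "sum_layer_weights s n R v"] sum_layer_weights_def relu_def)
  have arch: "replicate (L - 1) B @ [1] = B # B # (replicate (L - 3) B @ [1])"
  proof -
    have "L - 1 = Suc (Suc (L - 3))" using L by simp
    then show ?thesis by simp
  qed
  have "realize (d # replicate (L - 1) B @ [1]) (hat_net L s n R w beta a v mu la) x 0
      = realize (replicate (Suc (L - 3)) B @ [1])
          (replicate (L - 3) (const_block R R mu, \<lambda>_. 0) @ [(const_block 1 R la, \<lambda>_. 0)]) ?y2 0"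
    unfolding arch hat_net_def by simp
  also have "\<dots> = real R * la * (real R * mu) ^ (L - 3) * ?z"
    using y2 relu_nonneg by (intro realize_const_blocks[OF RB nonneg(4)]) auto
  finally show ?thesis .
qed

lemma lq_norm_zero [simp]: "lq_norm q I (\<lambda>_. 0) = 0"
  by (simp add: lq_norm_def image_constant_conv)

lemma lq_norm_le_sparse:
  assumes q: "1 \<le> q" and I: "finite I" "T \<subseteq> I" and zero: "\<And>i. i \<in> I - T \<Longrightarrow> a i = 0"
    and bound: "\<And>i. i \<in> T \<Longrightarrow> \<bar>a i\<bar> \<le> e" and T: "card T \<le> n" and n: "1 \<le> n" and e: "0 \<le> e"
  shows "lq_norm q I a \<le> e * real n powr inv_exp q"
proof (cases "q = \<infinity>")
  case True
  have "\<bar>a i\<bar> \<le> e" if "i \<in> I" for i using that zero bound e by (cases "i \<in> T") auto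
  then show ?thesis using True I e n by (simp add: lq_norm_def inv_exp_def Max_le_iff)
next
  case False
  define r where "r = real_of_ereal q"
  have r: "1 \<le> r" using real_of_ereal_ge_1[OF q False] by (simp add: r_def)
  have "(\<Sum>i\<in>I. \<bar>a i\<bar> powr r) = (\<Sum>i\<in>T. \<bar>a i\<bar> powr r)"
    using I zero by (intro sum.mono_neutral_right) auto
  also have "\<dots> \<le> (\<Sum>i\<in>T. e powr r)" using bound r by (intro sum_mono powr_mono2) auto
  also have "\<dots> \<le> real n * e powr r" using T by (simp add: mult_right_mono)
  finally have "(\<Sum>i\<in>I. \<bar>a i\<bar> powr r) powr (1 / r) \<le> (real n * e powr r) powr (1 / r)"
    using r by (intro powr_mono2) (auto intro: sum_nonneg)
  also have "\<dots> = e * real n powr (1 / r)" using r e by (simp add: powr_mult powr_powr)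
  finally show ?thesis using False by (simp add: lq_norm_def inv_exp_def r_def)
qed

lemma lq_norm_const_block:
  assumes q: "1 \<le> q" and R: "R1 \<le> M" "R2 \<le> N" "1 \<le> R1 * R2" and a: "0 \<le> a"
  shows "lq_norm q ({..<M} \<times> {..<N}) (\<lambda>(i, j). const_block R1 R2 a i j) \<le> a * real (R1 * R2) powr inv_exp q"
  using R a by (intro lq_norm_le_sparse[OF q, where T = "{..<R1} \<times> {..<R2}"])
    (auto simp: const_block_def card_cartesian_product split: if_splits)

lemma coeff_norm_le:
  assumes "0 \<le> c"
    and "\<And>k. k < length \<Phi> \<Longrightarrow> lq_norm q ({..<arch ! Suc k} \<times> {..<arch ! k}) (\<lambda>(i, j). fst (\<Phi> ! k) i j) \<le> c"
    and "\<And>k. k < length \<Phi> \<Longrightarrow> lq_norm q {..<arch ! Suc k} (snd (\<Phi> ! k)) \<le> c"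
  shows "coeff_norm q arch \<Phi> \<le> c"
  using assms unfolding coeff_norm_def by (subst Max_le_iff) auto

lemma lq_norm_abs_layer_weights:
  assumes q: "1 \<le> q" and s: "0 < s" "s \<le> d" and n: "1 \<le> n" "n \<le> B" and w: "0 \<le> w"
  shows "lq_norm q ({..<B} \<times> {..<d}) (\<lambda>(i, j). abs_layer_weights s n w i j) \<le> w * real n powr inv_exp q"
proof -
  have "(\<lambda>r. (r, r mod s)) ` {..<n} \<subseteq> {..<B} \<times> {..<d}"
    using n s by (auto intro: order_less_le_trans[OF mod_less_divisor])
  then show ?thesis
    using w n card_image_le[of "{..<n}" "\<lambda>r. (r, r mod s)"]
    by (intro lq_norm_le_sparse[OF q, where T = "(\<lambda>r. (r, r mod s)) ` {..<n}"])
      (auto simp: abs_layer_weights_def)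
qed

lemma lq_norm_abs_layer_bias:
  assumes q: "1 \<le> q" and s: "0 < s" and n: "1 \<le> n" "n \<le> B" and beta: "0 \<le> beta" "beta \<le> w"
    and a: "\<And>j. j < s \<Longrightarrow> 0 \<le> a j \<and> a j \<le> 1"
  shows "lq_norm q {..<B} (abs_layer_bias s n w beta a) \<le> w * real n powr inv_exp q"
proof (rule lq_norm_le_sparse[OF q, where T = "{..<n}"])
  show "\<bar>abs_layer_bias s n w beta a r\<bar> \<le> w" if "r \<in> {..<n}" for r
    using a[of "r mod s"] s beta by (auto simp: abs_layer_bias_def abs_mult mult_left_le)
qed (use n beta in \<open>auto simp: abs_layer_bias_def\<close>)

lemma lq_norm_sum_layer_weights:
  assumes q: "1 \<le> q" and n: "1 \<le> n" "n \<le> B" and R: "1 \<le> R" "R \<le> B" and v: "0 \<le> v"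
  shows "lq_norm q ({..<B} \<times> {..<B}) (\<lambda>(i, j). sum_layer_weights s n R v i j) \<le> v * real (R * n) powr inv_exp q"
  using n R v by (intro lq_norm_le_sparse[OF q, where T = "{..<R} \<times> {..<n}"])
    (auto simp: sum_layer_weights_def card_cartesian_product split: if_splits)

lemma hat_net_in_Hclass:
  assumes q: "1 \<le> q" and c: "0 < c" and s: "0 < s" "s \<le> d" and n: "n = s * (3 * R1)" "n \<le> B" "1 \<le> R1"
    and R: "1 \<le> R" "R \<le> B" and L: "3 \<le> L" and beta: "0 \<le> beta" "beta \<le> w"
    and a: "\<And>j. j < s \<Longrightarrow> 0 \<le> a j \<and> a j \<le> 1"
    and w_def: "w = c / real n powr inv_exp q" and v_def: "v = c / real (R * n) powr inv_exp q"
    and mu_def: "mu = c / real (R * R) powr inv_exp q" and la_def: "la = c / real R powr inv_exp q"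
  shows "(\<lambda>x. realize (d # replicate (L - 1) B @ [1]) (hat_net L s n R w beta a v mu la) x 0)
           \<in> Hclass q (d # replicate (L - 1) B @ [1]) c"
proof -
  let ?arch = "d # replicate (L - 1) B @ [1]"
  let ?\<Phi> = "hat_net L s n R w beta a v mu la"
  have n1: "1 \<le> n" using n s by simp
  have w: "0 \<le> w" using c by (simp add: w_def)
  have W1: "lq_norm q ({..<B} \<times> {..<d}) (\<lambda>(i, j). abs_layer_weights s n w i j) \<le> c"
    using lq_norm_abs_layer_weights[OF q s n1 n(2) w] n1 by (simp add: w_def)
  have b1: "lq_norm q {..<B} (abs_layer_bias s n w beta a) \<le> c"
    using lq_norm_abs_layer_bias[OF q s(1) n1 n(2) beta a] n1 by (simp add: w_def)
  have W2: "lq_norm q ({..<B} \<times> {..<B}) (\<lambda>(i, j). sum_layer_weights s n R v i j) \<le> c"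
    using lq_norm_sum_layer_weights[OF q n1 n(2) R, of v s] n1 R c by (simp add: v_def)
  have W3: "lq_norm q ({..<B} \<times> {..<B}) (\<lambda>(i, j). const_block R R mu i j) \<le> c"
    using lq_norm_const_block[OF q R(2) R(2), of mu] R c by (simp add: mu_def)
  have W4: "lq_norm q ({..<1} \<times> {..<B}) (\<lambda>(i, j). const_block 1 R la i j) \<le> c"
    using lq_norm_const_block[OF q _ R(2), of 1 1 la] R c by (simp add: la_def)
  have layer: "lq_norm q ({..<?arch ! Suc k} \<times> {..<?arch ! k}) (\<lambda>(i, j). fst (?\<Phi> ! k) i j) \<le> c
      \<and> lq_norm q {..<?arch ! Suc k} (snd (?\<Phi> ! k)) \<le> c" if k: "k < length ?\<Phi>" for k
  proof -
    consider "k = 0" | "k = 1" | "2 \<le> k" "k < L - 1" | "k = L - 1"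
      using k L by (fastforce simp: hat_net_def)
    then show ?thesis
    proof cases
      case 1
      have "?arch ! Suc 0 = B" using L by (simp add: nth_append)
      then show ?thesis using 1 W1 b1 by (simp add: hat_net_def)
    next
      case 2
      have "?arch ! Suc 1 = B" "?arch ! 1 = B" using L by (auto simp: nth_append)
      then show ?thesis using 2 W2 c by (simp add: hat_net_def)
    next
      case 3
      have "?arch ! Suc k = B" "?arch ! k = B" "?\<Phi> ! k = (const_block R R mu, \<lambda>_. 0)"
        using 3 by (auto simp: hat_net_def nth_append nth_Cons')
      then show ?thesis using W3 c by simp
    next
      case 4
      have "?arch ! Suc k = 1" "?arch ! k = B" "?\<Phi> ! k = (const_block 1 R la, \<lambda>_. 0)"
        using 4 L by (auto simp: hat_net_def nth_append nth_Cons')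
      then show ?thesis using W4 c by simp
    qed
  qed
  have "coeff_norm q ?arch ?\<Phi> \<le> c" using layer c by (intro coeff_norm_le) auto
  moreover have "length ?\<Phi> + 1 = length ?arch" using L by (simp add: hat_net_def)
  ultimately show ?thesis unfolding Hclass_def by blast
qed

definition hat_gain :: "real \<Rightarrow> real \<Rightarrow> nat \<Rightarrow> nat \<Rightarrow> nat \<Rightarrow> nat \<Rightarrow> real" where
  "hat_gain i c L s R R1 =
     c ^ L * (real R powr (1 - 2 * i)) ^ (L - 2) * real (s * (3 * R1)) powr (1 - 2 * i) / (3 * real s)"

lemma hat_gain_eq_weights:
  fixes c i :: real
  assumes R: "1 \<le> R" and R1: "1 \<le> R1" and s: "0 < s" and L: "3 \<le> L" and n: "n = s * (3 * R1)"
  shows "real R * (c / real R powr i) * (real R * (c / real (R * R) powr i)) ^ (L - 3)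
           * (c / real (R * n) powr i * real R1 * (c / real n powr i)) = hat_gain i c L s R R1"
proof -
  define P Q where "P = real R powr i" and "Q = real n powr i"
  have P: "0 < P" and Q: "0 < Q" using R R1 s n by (auto simp: P_def Q_def)
  define \<beta> where "\<beta> = real R / (P * P)"
  have sq: "x powr (1 - 2 * i) = x / (x powr i * x powr i)" if "0 < x" for x :: real
  proof -
    have "x powr (2 * i) = x powr i * x powr i" by (subst mult_2) (rule powr_add)
    then show ?thesis using that by (simp add: powr_diff)
  qed
  have "real R powr (1 - 2 * i) = \<beta>" using R by (simp add: sq \<beta>_def P_def)
  moreover have "real n powr (1 - 2 * i) / (3 * real s) = real R1 / (Q * Q)"
    using R1 s n by (simp add: sq Q_def)
  ultimately have gain: "hat_gain i c L s R R1 = c ^ L * \<beta> ^ (L - 2) * (real R1 / (Q * Q))"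
    by (simp add: hat_gain_def n flip: times_divide_eq_right)
  have "real R * (c / real R powr i) * (real R * (c / real (R * R) powr i)) ^ (L - 3)
      * (c / real (R * n) powr i * real R1 * (c / real n powr i))
      = (c * \<beta>) ^ (L - 3) * (real R * (c / P) * (c / (P * Q) * real R1 * (c / Q)))"
    by (simp add: P_def Q_def \<beta>_def powr_mult ac_simps)
  also have "real R * (c / P) * (c / (P * Q) * real R1 * (c / Q)) = c ^ 3 * \<beta> * (real R1 / (Q * Q))"
    using P Q by (simp add: \<beta>_def power3_eq_cube ac_simps)
  also have "(c * \<beta>) ^ (L - 3) * (c ^ 3 * \<beta> * (real R1 / (Q * Q))) = c ^ L * \<beta> ^ (L - 2) * (real R1 / (Q * Q))"
  proof -
    have "c ^ L = c ^ (L - 3) * c ^ 3" using L by (simp flip: power_add)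
    moreover have "L - 2 = Suc (L - 3)" using L by simp
    then have "\<beta> ^ (L - 2) = \<beta> ^ (L - 3) * \<beta>" by (simp only: power_Suc2)
    ultimately show ?thesis by (simp add: power_mult_distrib)
  qed
  finally show ?thesis by (simp add: gain)
qed

lemma hat_gain_nonneg: "0 < c \<Longrightarrow> 0 \<le> hat_gain i c L s R R1"
  by (simp add: hat_gain_def)

lemma hat_in_Hclass:
  assumes q: "1 \<le> q" and c: "0 < c" and s: "0 < s" "s \<le> d" and R1: "1 \<le> R1" "s * (3 * R1) \<le> B"
    and R: "1 \<le> R" "R \<le> B" and L: "3 \<le> L" and rho: "0 \<le> rho" "rho \<le> real s"
    and a: "\<And>j. j < s \<Longrightarrow> 0 \<le> a j \<and> a j \<le> 1"
  shows "(\<lambda>x. hat_gain (inv_exp q) c L s R R1 * hat s rho a x) \<in> Hclass q (d # replicate (L - 1) B @ [1]) c"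
proof -
  define n where "n = s * (3 * R1)"
  define w v mu la where "w = c / real n powr inv_exp q" and "v = c / real (R * n) powr inv_exp q"
    and "mu = c / real (R * R) powr inv_exp q" and "la = c / real R powr inv_exp q"
  define beta where "beta = w * rho / real s"
  have nonneg: "0 \<le> w" "0 \<le> v" "0 \<le> mu" using c by (simp_all add: w_def v_def mu_def)
  have beta: "0 \<le> beta" "beta \<le> w"
    using nonneg rho s by (simp_all add: beta_def divide_le_eq mult_left_mono)
  have "(\<lambda>x. realize (d # replicate (L - 1) B @ [1]) (hat_net L s n R w beta a v mu la) x 0)
      \<in> Hclass q (d # replicate (L - 1) B @ [1]) c"
    using q c s R1 R L beta a by (intro hat_net_in_Hclass) (simp_all add: n_def w_def v_def mu_def la_def)
  moreover have "realize (d # replicate (L - 1) B @ [1]) (hat_net L s n R w beta a v mu la) x 0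
      = hat_gain (inv_exp q) c L s R R1 * hat s rho a x" for x
  proof -
    have "(\<Sum>j<s. beta - w * \<bar>x j - a j\<bar>) = w * (rho - (\<Sum>j<s. \<bar>x j - a j\<bar>))"
      using s by (simp add: sum_subtractf sum_distrib_left beta_def algebra_simps)
    then have "relu (v * real R1 * (\<Sum>j<s. beta - w * \<bar>x j - a j\<bar>))
        = v * real R1 * w * relu (rho - (\<Sum>j<s. \<bar>x j - a j\<bar>))"
      using nonneg by (simp add: relu_mult_nonneg mult.assoc)
    moreover have "real R * la * (real R * mu) ^ (L - 3) * (v * real R1 * w) = hat_gain (inv_exp q) c L s R R1"
      using hat_gain_eq_weights[OF R(1) R1(1) s(1) L n_def, of c "inv_exp q"]
      by (simp add: w_def v_def mu_def la_def mult.assoc)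
    ultimately show ?thesis
      using realize_hat_net[OF s n_def _ R(2) L nonneg(1) beta(1) nonneg(2,3), of a la x] R1
      by (simp add: n_def hat_def mult.assoc)
  qed
  ultimately show ?thesis by simp
qed

lemma div_three_mult_bounds:
  fixes B s :: nat
  assumes s: "0 < s" and B: "3 * s \<le> B"
  shows "1 \<le> B div (3 * s)" "s * (3 * (B div (3 * s))) \<le> B" "B \<le> 2 * (s * (3 * (B div (3 * s))))"
proof -
  define t where "t = 3 * s"
  have t: "0 < t" "t \<le> B" using s B by (simp_all add: t_def)
  then have q: "0 < B div t" by (simp add: div_greater_zero_iff)
  then show "1 \<le> B div (3 * s)" by (simp add: t_def)
  have "s * (3 * (B div (3 * s))) = t * (B div t)" by (simp add: t_def)
  moreover have "t * (B div t) \<le> B" by (simp add: mult.commute)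
  moreover have "B < 2 * (t * (B div t))"
  proof -
    have "B mod t < t" "t \<le> t * (B div t)" using t q by simp_all
    then show ?thesis using mult_div_mod_eq[of t B] by linarith
  qed
  ultimately show "s * (3 * (B div (3 * s))) \<le> B" "B \<le> 2 * (s * (3 * (B div (3 * s))))" by simp_all
qed

lemma hat_gain_single_unit:
  assumes c: "0 < c" and s: "0 < s"
  shows "1 / (4 * 3 powr (2 * i)) * c ^ L * real s powr (1 - 2 * i) \<le> hat_gain i c L s 1 1 * real s"
proof -
  have "real (s * 3) powr (1 - 2 * i) = 3 / 3 powr (2 * i) * real s powr (1 - 2 * i)"
    by (simp add: powr_mult powr_diff ac_simps)
  then have "hat_gain i c L s 1 1 * real s = c ^ L * real s powr (1 - 2 * i) / 3 powr (2 * i)"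
    using s by (simp add: hat_gain_def)
  moreover have "0 \<le> c ^ L * real s powr (1 - 2 * i) / 3 powr (2 * i)" using c by simp
  ultimately show ?thesis by simp
qed

lemma hat_gain_full_width:
  assumes c: "0 < c" and s: "0 < s" and B: "3 * s \<le> B" and i: "0 \<le> i" "i \<le> 1 / 2" and L: "3 \<le> L"
  shows "1 / 24 * c ^ L * (real B powr (1 - 2 * i)) ^ (L - 1) \<le> hat_gain i c L s B (B div (3 * s)) * real s"
proof -
  define n where "n = s * (3 * (B div (3 * s)))"
  note bounds = div_three_mult_bounds[OF s B, folded n_def]
  have n: "1 \<le> n" "real B \<le> 2 * real n"
    using bounds(1,3) s of_nat_le_iff[of B "2 * n", where 'a = real] by (simp_all add: n_def)
  define \<beta> where "\<beta> = real B powr (1 - 2 * i)"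
  have "\<beta> \<le> (2 * real n) powr (1 - 2 * i)" using n i B s by (simp add: \<beta>_def powr_mono2)
  also have "\<dots> \<le> 2 * real n powr (1 - 2 * i)"
  proof -
    have "2 powr (1 - 2 * i) \<le> 2 powr 1" using i by (intro powr_mono) auto
    then show ?thesis by (simp add: powr_mult mult_right_mono)
  qed
  finally have \<beta>: "\<beta> \<le> 2 * real n powr (1 - 2 * i)" .
  have "(real B powr (1 - 2 * i)) ^ (L - 1) = \<beta> ^ (L - 2) * \<beta>"
  proof -
    have "L - 1 = Suc (L - 2)" using L by simp
    then show ?thesis by (simp only: \<beta>_def power_Suc2)
  qed
  moreover have "hat_gain i c L s B (B div (3 * s)) * real s = c ^ L * \<beta> ^ (L - 2) * real n powr (1 - 2 * i) / 3"
    using s by (simp add: hat_gain_def \<beta>_def n_def)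
  moreover have "c ^ L * \<beta> ^ (L - 2) * \<beta> \<le> c ^ L * \<beta> ^ (L - 2) * (2 * real n powr (1 - 2 * i))"
    using \<beta> c by (intro mult_left_mono) (auto simp: \<beta>_def)
  moreover have "0 \<le> c ^ L * \<beta> ^ (L - 2) * real n powr (1 - 2 * i)" using c by (simp add: \<beta>_def)
  ultimately show ?thesis by (simp add: mult.assoc)
qed

lemma err_MC_ge_network_hats:
  assumes L: "3 \<le> L" and m: "1 \<le> m" and p: "1 \<le> p" and q: "1 \<le> q" and c: "0 < c" and c0: "0 < c0"
    and UL: "U \<subseteq> Lp_space p d" and u0: "u0 \<in> U"
    and copy: "\<forall>h\<in>Hclass q (d # replicate (L - 1) B @ [1]) c. \<exists>v\<in>U. \<forall>x\<in>cube d. v x = u0 x + c0 * h x"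
    and s: "1 \<le> s" "s \<le> d" and R: "1 \<le> R" "R \<le> B" and R1: "1 \<le> R1" "s * (3 * R1) \<le> B"
  shows "ennreal (c0 * (hat_gain (inv_exp q) c L s R R1 * real s) / (64 * real s) powr (1 + real s * inv_exp p)
           * real m powr (- inv_exp p - 1 / real s)) \<le> err_MC TYPE('w) m U p d"
proof (rule err_MC_ge_hats[OF p m s c0 hat_gain_nonneg[OF c] UL u0])
  fix rho :: real and a :: "nat \<Rightarrow> real" assume "0 < rho" "rho \<le> 1" "\<And>j. j < s \<Longrightarrow> 0 \<le> a j \<and> a j \<le> 1"
  then have "(\<lambda>x. hat_gain (inv_exp q) c L s R R1 * hat s rho a x) \<in> Hclass q (d # replicate (L - 1) B @ [1]) c"
    using s by (intro hat_in_Hclass[OF q c _ s(2) R1 R L]) auto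
  then show "\<exists>v\<in>U. \<forall>x\<in>cube d. v x = u0 x + c0 * (hat_gain (inv_exp q) c L s R R1 * hat s rho a x)"
    using bspec[OF copy] by simp
qed

theorem theorem2p2:
  fixes L d B s m :: nat and p q :: ereal and c c0 :: real
    and U :: "((nat \<Rightarrow> real) \<Rightarrow> real) set" and u0 :: "(nat \<Rightarrow> real) \<Rightarrow> real"
  assumes "L \<ge> 3" and "d \<ge> 1" and "B \<ge> 1" and "m \<ge> 1"
    and "1 \<le> p" and "1 \<le> q" and "c > 0" and "c0 > 0"
    and "\<forall>u\<in>U. continuous_on (cube d) u \<and> u \<in> Lp_space p d"
    and "u0 \<in> U"
    and "\<forall>h\<in>Hclass q (d # replicate (L - 1) B @ [1]) c.
           \<exists>v\<in>U. \<forall>x\<in>cube d. v x = u0 x + c0 * h x"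
    and "1 \<le> s" and "real s \<le> real B / 3" and "s \<le> d"
  shows "(q \<le> 2 \<longrightarrow>
           err_MC TYPE('w) m U p d \<ge> ennreal (c0 *
             ((1 / (4 * 3 powr (2 * inv_exp q))) * c ^ L * real s powr (1 - 2 * inv_exp q))
             / (64 * real s) powr (1 + real s * inv_exp p)
             * real m powr (- inv_exp p - 1 / real s)))
       \<and> (q \<ge> 2 \<longrightarrow>
           err_MC TYPE('w) m U p d \<ge> ennreal (c0 *
             ((1 / 24) * c ^ L * (real B powr (1 - 2 * inv_exp q)) ^ (L - 1))
             / (64 * real s) powr (1 + real s * inv_exp p)
             * real m powr (- inv_exp p - 1 / real s)))"
proof -
  have s: "0 < s" and B: "3 * s \<le> B" using assms(12,13) by simp_all
  have UL: "U \<subseteq> Lp_space p d" using assms(9) by blast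
  note network_bound = err_MC_ge_network_hats[OF assms(1,4,5,6,7,8) UL assms(10,11,12,14)]
  have weaken: "ennreal (c0 * \<Omega> / (64 * real s) powr (1 + real s * inv_exp p) * real m powr (- inv_exp p - 1 / real s))
      \<le> ennreal (c0 * G / (64 * real s) powr (1 + real s * inv_exp p) * real m powr (- inv_exp p - 1 / real s))"
    if "\<Omega> \<le> G" for \<Omega> G
    using that assms(8) by (intro ennreal_leI mult_right_mono divide_right_mono mult_left_mono) auto
  show ?thesis (is "(_ \<longrightarrow> ?single_unit) \<and> (_ \<longrightarrow> ?full_width)")
  proof (intro conjI impI)
    \<comment> \<open>The single-unit bound holds for every \<open>q\<close>; the case split only selects the better one.\<close>
    show ?single_unit
      using B assms(3) by (intro order_trans[OF weaken[OF hat_gain_single_unit[OF assms(7) s]]] network_bound) auto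
  next
    assume "q \<ge> 2"
    then have "0 \<le> inv_exp q" "inv_exp q \<le> 1 / 2" using inv_exp_bounds[OF assms(6)] inv_exp_le_half by auto
    then show ?full_width
      using div_three_mult_bounds[OF s B] assms(3)
      by (intro order_trans[OF weaken[OF hat_gain_full_width[OF assms(7) s B _ _ assms(1)]]] network_bound) auto
  qed
qed

end
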